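(* Let $\sigma_e>0$, $\beta=(\beta_2,\beta_1)^T\in\mathbb{R}^2$. For every integer $n>2$ let $x_1,\dots,x_n\in\mathbb{R}$ be deterministic (possibly depending on $n$), $X_n$ the $n\times2$ matrix with rows $(1,x_i)$, $Y_n=(y_1,\dots,y_n)^T\sim\mathcal{N}(X_n\beta,\sigma_e^2I_{n\times n})$, and let $\Delta_n>0$, $\rho_n>0$ be sequences. Assume: (1) $\bar x\to c_x$, $\overline{x^2}\to c_{x^2}$ with $c_{x^2}>c_x^2$; (2) $\eta_n^2\to\eta^2$ for some $\eta\in\mathbb{R}$, where $\eta_n^2=\|X_n\beta-X_n\beta^N\|^2/\sigma_e^2$, $\beta^N=(\beta_2+\beta_1\bar x,0)^T$; (3) $\Delta_n^2/(\rho_nn)\to0$, $\Delta_n^4/(\rho_nn)\to0$; (4) $\mathbb{P}[\exists i,\ y_i\notin[-\Delta_n,\Delta_n]]\to0$ and $x_i\in[-\Delta_n,\Delta_n]$ for all $i$. Then $$\frac{n(\tilde\beta^T\tilde M_n\tilde\beta-2\tilde\beta^T\tilde F_n+\tilde G_n)}{n-2}\xrightarrow{P}\sigma_e^2\quad\text{and}\quad n(\tilde\beta-\tilde\beta^N)^T\tilde M_n(\tilde\beta-\tilde\beta^N)\xrightarrow{D}\chi^2_1(\eta^2)\,\sigma_e^2.$$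
   Context: $\bar x=\frac1n\sum x_i$, $\overline{x^2}=\frac1n\sum x_i^2$. $[z]_a^b$ is $z$ clipped to $[a,b]$. With $\Delta=\Delta_n$, $\rho'=\rho_n/5$ and independent Gaussian noises: $\tilde{\bar x}=\frac1n\sum_i[x_i]_{-\Delta}^{\Delta}+\mathcal{N}(0,\frac{2\Delta^2}{\rho'n^2})$, $\tilde{\bar y}=\frac1n\sum_i[y_i]_{-\Delta}^{\Delta}+\mathcal{N}(0,\frac{2\Delta^2}{\rho'n^2})$, $\widetilde{\overline{x^2}}=\frac1n\sum_i[x_i^2]_0^{\Delta^2}+\mathcal{N}(0,\frac{\Delta^4}{2\rho'n^2})$, $\widetilde{\overline{xy}}=\frac1n\sum_i[x_iy_i]_{-\Delta^2}^{\Delta^2}+\mathcal{N}(0,\frac{2\Delta^4}{\rho'n^2})$, $\widetilde{\overline{y^2}}=\frac1n\sum_i[y_i^2]_0^{\Delta^2}+\mathcal{N}(0,\frac{\Delta^4}{2\rho'n^2})$; $\tilde\beta_1=\frac{\widetilde{\overline{xy}}-\tilde{\bar x}\tilde{\bar y}}{\widetilde{\overline{x^2}}-\tilde{\bar x}^2}$, $\tilde\beta_2=\frac{\tilde{\bar y}\widetilde{\overline{x^2}}-\tilde{\bar x}\widetilde{\overline{xy}}}{\widetilde{\overline{x^2}}-\tilde{\bar x}^2}$, $\tilde\beta=(\tilde\beta_2,\tilde\beta_1)^T$, $\tilde\beta^N=(\tilde{\bar y},0)^T$, $\tilde M_n=\begin{pmatrix}1&\tilde{\bar x}\\\tilde{\bar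 x}&\widetilde{\overline{x^2}}\end{pmatrix}$, $\tilde F_n=(\tilde{\bar y},\widetilde{\overline{xy}})^T$, $\tilde G_n=\widetilde{\overline{y^2}}$. $\chi^2_K(\lambda)$ is the law of $\|Z\|^2$ with $Z\sim\mathcal{N}(v,I_{K\times K})$, $\|v\|^2=\lambda$; $\chi^2_1(\eta^2)\sigma_e^2$ denotes the law of $\sigma_e^2W$ with $W\sim\chi^2_1(\eta^2)$. Convergence is as $n\to\infty$. *)

theory Defs
  imports "HOL-Probability.Probability"
begin

definition clip :: "real \<Rightarrow> real \<Rightarrow> real \<Rightarrow> real" where
  "clip a b z = max a (min b z)"

text \<open>Arguments: clipping bound D (Delta_n), privacy
  parameter r (rho_n), sample size n, covariates x, responses y, and five independent
  standard normal variables z 0, ..., z 4 (scaled to the required variances).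
  rho' = r / 5.\<close>

definition xbar_t :: "real \<Rightarrow> real \<Rightarrow> nat \<Rightarrow> (nat \<Rightarrow> real) \<Rightarrow> (nat \<Rightarrow> real) \<Rightarrow> (nat \<Rightarrow> real) \<Rightarrow> real" where
  "xbar_t D r n x y z = (\<Sum>i<n. clip (-D) D (x i)) / real n
      + sqrt (2 * D^2 / ((r/5) * (real n)^2)) * z 0"

definition ybar_t :: "real \<Rightarrow> real \<Rightarrow> nat \<Rightarrow> (nat \<Rightarrow> real) \<Rightarrow> (nat \<Rightarrow> real) \<Rightarrow> (nat \<Rightarrow> real) \<Rightarrow> real" where
  "ybar_t D r n x y z = (\<Sum>i<n. clip (-D) D (y i)) / real n
      + sqrt (2 * D^2 / ((r/5) * (real n)^2)) * z 1"

definition x2bar_t :: "real \<Rightarrow> real \<Rightarrow> nat \<Rightarrow> (nat \<Rightarrow> real) \<Rightarrow> (nat \<Rightarrow> real) \<Rightarrow> (nat \<Rightarrow> real) \<Rightarrow> real" where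
  "x2bar_t D r n x y z = (\<Sum>i<n. clip 0 (D^2) ((x i)^2)) / real n
      + sqrt (D^4 / (2 * (r/5) * (real n)^2)) * z 2"

definition xybar_t :: "real \<Rightarrow> real \<Rightarrow> nat \<Rightarrow> (nat \<Rightarrow> real) \<Rightarrow> (nat \<Rightarrow> real) \<Rightarrow> (nat \<Rightarrow> real) \<Rightarrow> real" where
  "xybar_t D r n x y z = (\<Sum>i<n. clip (-(D^2)) (D^2) (x i * y i)) / real n
      + sqrt (2 * D^4 / ((r/5) * (real n)^2)) * z 3"

definition y2bar_t :: "real \<Rightarrow> real \<Rightarrow> nat \<Rightarrow> (nat \<Rightarrow> real) \<Rightarrow> (nat \<Rightarrow> real) \<Rightarrow> (nat \<Rightarrow> real) \<Rightarrow> real" where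
  "y2bar_t D r n x y z = (\<Sum>i<n. clip 0 (D^2) ((y i)^2)) / real n
      + sqrt (D^4 / (2 * (r/5) * (real n)^2)) * z 4"

text \<open>Private OLS estimates (beta_1 = slope, beta_2 = intercept).\<close>
definition beta1_t where
  "beta1_t D r n x y z =
     (xybar_t D r n x y z - xbar_t D r n x y z * ybar_t D r n x y z) /
     (x2bar_t D r n x y z - (xbar_t D r n x y z)^2)"

definition beta2_t where
  "beta2_t D r n x y z =
     (ybar_t D r n x y z * x2bar_t D r n x y z - xbar_t D r n x y z * xybar_t D r n x y z) /
     (x2bar_t D r n x y z - (xbar_t D r n x y z)^2)"

definition qform2 :: "real \<Rightarrow> real \<Rightarrow> real \<Rightarrow> real \<Rightarrow> real \<Rightarrow> real" where
  "qform2 a b c u v = u * u * a + 2 * u * v * b + v * v * c"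

text \<open>beta~^T M~ beta~ - 2 beta~^T F~ + G~ with beta~ = (beta2~, beta1~),
  M~ = ((1, xbar~),(xbar~, x2bar~)), F~ = (ybar~, xybar~), G~ = y2bar~.\<close>
definition resid_t where
  "resid_t D r n x y z =
     qform2 1 (xbar_t D r n x y z) (x2bar_t D r n x y z) (beta2_t D r n x y z) (beta1_t D r n x y z)
     - 2 * (beta2_t D r n x y z * ybar_t D r n x y z + beta1_t D r n x y z * xybar_t D r n x y z)
     + y2bar_t D r n x y z"

text \<open>(beta~ - beta~N)^T M~ (beta~ - beta~N) with beta~N = (ybar~, 0).\<close>
definition ftest_t where
  "ftest_t D r n x y z =
     qform2 1 (xbar_t D r n x y z) (x2bar_t D r n x y z)
       (beta2_t D r n x y z - ybar_t D r n x y z) (beta1_t D r n x y z - 0)"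

end

theory Submission
  imports Defs "HOL-Real_Asymp.Real_Asymp"
begin

(* Each private statistic equals its non-private counterpart, plus Gaussian privacy noise whose
   variance is o(1/n) by the assumptions on Delta_n and rho_n, plus a clipping error that vanishes
   outside the event that some y_i is clipped, whose probability tends to 0. The non-private means
   are consistent by second-moment bounds for sums of independent Gaussians, so all five private
   statistics are consistent, and since the algebraic operations are continuous in probability,
   beta~ tends to beta and the scaled residual to sigma_e^2.

   Wherever the denominator x2~ - x~^2 is non-zero, n (beta~ - beta~N)^T M~ (beta~ - beta~N)
   equals (sqrt n (xy~ - x~ y~))^2 / (x2~ - x~^2). Up to an o_P(1) error the numerator is
   S_xy / sqrt n, and U = S_xy / (sigma_e sqrt S_xx) is exactly normal with unit variance and
   mean beta_1 sqrt S_xx / sigma_e, whose square is eta_n^2. The test statistic is therefore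
   sigma_e^2 U^2 + o_P(1), and a Slutsky argument with Lipschitz test functions gives convergence
   in distribution to sigma_e^2 (W + eta)^2 with W standard normal. *)

lemma tendsto_of_power2_tendsto:
  fixes a :: "nat \<Rightarrow> real"
  assumes sq: "(\<lambda>n. (a n)^2) \<longlonglongrightarrow> \<eta>^2" and same_sign: "\<And>n. a n * \<eta> \<ge> 0"
  shows "a \<longlonglongrightarrow> \<eta>"
proof -
  have abs_lim: "(\<lambda>n. \<bar>a n\<bar>) \<longlonglongrightarrow> \<bar>\<eta>\<bar>"
    using tendsto_real_sqrt[OF sq] by simp
  show ?thesis
  proof (cases "\<eta> = 0")
    case True
    then show ?thesis using abs_lim tendsto_rabs_zero_iff by fastforce
  next
    case False
    have "a n = sgn \<eta> * \<bar>a n\<bar>" for n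
      using same_sign[of n] False by (cases "\<eta> > 0") (auto simp: zero_le_mult_iff)
    moreover have "(\<lambda>n. sgn \<eta> * \<bar>a n\<bar>) \<longlonglongrightarrow> sgn \<eta> * \<bar>\<eta>\<bar>"
      by (intro tendsto_intros abs_lim)
    ultimately show ?thesis by (simp add: sgn_mult_abs)
  qed
qed

lemma tendsto_power2_zero_of_real_mult:
  fixes c :: "nat \<Rightarrow> real"
  assumes "(\<lambda>n. real n * (c n)^2) \<longlonglongrightarrow> 0"
  shows "(\<lambda>n. (c n)^2) \<longlonglongrightarrow> 0"
proof (rule Lim_null_comparison[OF _ assms])
  show "\<forall>\<^sub>F n in sequentially. norm ((c n)^2) \<le> real n * (c n)^2"
    using eventually_gt_at_top[of 0] by eventually_elim (simp add: mult_le_cancel_right1)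
qed

lemma clip_eq_self: "a \<le> z \<Longrightarrow> z \<le> b \<Longrightarrow> clip a b z = z"
  by (simp add: clip_def)

lemma borel_measurable_clip [measurable]:
  "f \<in> borel_measurable N \<Longrightarrow> (\<lambda>\<omega>. clip a b (f \<omega>)) \<in> borel_measurable N"
  unfolding clip_def by (intro borel_measurable_max borel_measurable_min) auto

lemma qform2_slope_eq:
  fixes a b c d :: real
  assumes "c - a * a \<noteq> 0"
  shows "qform2 1 a c ((b * c - a * d) / (c - a^2) - b) ((d - a * b) / (c - a^2) - 0)
           = (d - a * b)^2 / (c - a * a)"
proof -
  define v where "v = (d - a * b) / (c - a * a)"
  have "(b * c - a * d) / (c - a^2) - b = - a * v"
    using assms by (simp add: v_def field_simps power2_eq_square)
  moreover have "qform2 1 a c (- a * v) v = v * v * (c - a * a)"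
    by (simp add: qform2_def algebra_simps)
  moreover have "v * v * (c - a * a) = (d - a * b)^2 / (c - a * a)"
    using assms by (simp add: v_def power2_eq_square)
  ultimately show ?thesis by (simp add: v_def power2_eq_square)
qed

lemma continuous_on_cts_step: "u < v \<Longrightarrow> continuous_on UNIV (cts_step u v)"
  using uniformly_continuous_imp_continuous[OF cts_step_uniformly_continuous] by blast

lemma borel_measurable_cts_step: "u < v \<Longrightarrow> cts_step u v \<in> borel_measurable borel"
  by (rule borel_measurable_continuous_onI[OF continuous_on_cts_step])

lemma abs_cts_step_le_1: "u < v \<Longrightarrow> \<bar>cts_step u v z\<bar> \<le> 1"
  by (auto simp: cts_step_def divide_simps)

lemma cts_step_lipschitz:
  assumes "u < v"
  shows "\<bar>cts_step u v a - cts_step u v b\<bar> \<le> 1 / (v - u) * \<bar>a - b\<bar>"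
proof -
  have clamp: "cts_step u v z = max 0 (min 1 ((v - z) / (v - u)))" for z
    using assms by (auto simp: cts_step_def field_simps max_def min_def)
  have "\<bar>max 0 (min 1 p) - max 0 (min 1 q)\<bar> \<le> \<bar>p - q\<bar>" for p q :: real
    by (auto simp: max_def min_def abs_if)
  moreover have "\<bar>(v - a) / (v - u) - (v - b) / (v - u)\<bar> = 1 / (v - u) * \<bar>a - b\<bar>"
    using assms by (simp add: diff_divide_distrib[symmetric] abs_divide abs_minus_commute)
  ultimately show ?thesis unfolding clamp by metis
qed

lemma tendsto_integral_std_normal_shift:
  fixes g :: "real \<Rightarrow> real"
  assumes cont: "continuous_on UNIV g" and bound: "\<And>t. \<bar>g t\<bar> \<le> B" and m: "m \<longlonglongrightarrow> \<eta>"
  shows "(\<lambda>n. \<integral>w. std_normal_density w * g (w + m n) \<partial>lborel)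
           \<longlonglongrightarrow> (\<integral>w. std_normal_density w * g (w + \<eta>) \<partial>lborel)"
proof (rule integral_dominated_convergence[where w="\<lambda>w. B * std_normal_density w"])
  have [measurable]: "g \<in> borel_measurable borel"
    using cont by (rule borel_measurable_continuous_onI)
  show "(\<lambda>w. std_normal_density w * g (w + \<eta>)) \<in> borel_measurable lborel"
    and "(\<lambda>w. std_normal_density w * g (w + m n)) \<in> borel_measurable lborel" for n
    by measurable
  show "integrable lborel (\<lambda>w. B * std_normal_density w)" by simp
  show "AE w in lborel. (\<lambda>n. std_normal_density w * g (w + m n))
          \<longlonglongrightarrow> std_normal_density w * g (w + \<eta>)"
  proof (rule AE_I2)
    fix w :: real
    have "isCont g (w + \<eta>)"
      using cont continuous_on_eq_continuous_at by blast
    then have "(\<lambda>n. g (w + m n)) \<longlonglongrightarrow> g (w + \<eta>)"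
      by (rule isCont_tendsto_compose) (intro tendsto_intros m)
    then show "(\<lambda>n. std_normal_density w * g (w + m n)) \<longlonglongrightarrow> std_normal_density w * g (w + \<eta>)"
      by (intro tendsto_intros)
  qed
  show "AE w in lborel. norm (std_normal_density w * g (w + m n)) \<le> B * std_normal_density w" for n
  proof (rule AE_I2)
    fix w :: real
    have "std_normal_density w * \<bar>g (w + m n)\<bar> \<le> std_normal_density w * B"
      by (intro mult_left_mono bound) simp
    then show "norm (std_normal_density w * g (w + m n)) \<le> B * std_normal_density w"
      by (simp add: abs_mult mult.commute)
  qed
qed

lemma (in finite_measure) measure_Collect_mono_pred:
  assumes "\<And>\<omega>. \<omega> \<in> space M \<Longrightarrow> P \<omega> \<Longrightarrow> Q \<omega>" "{\<omega>\<in>space M. Q \<omega>} \<in> sets M"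
  shows "measure M {\<omega>\<in>space M. P \<omega>} \<le> measure M {\<omega>\<in>space M. Q \<omega>}"
  by (rule finite_measure_mono) (use assms in auto)

lemma (in finite_measure) measure_Collect_disj_le:
  assumes "\<And>\<omega>. \<omega> \<in> space M \<Longrightarrow> P \<omega> \<Longrightarrow> Q \<omega> \<or> R \<omega>"
    "{\<omega>\<in>space M. Q \<omega>} \<in> sets M" "{\<omega>\<in>space M. R \<omega>} \<in> sets M"
  shows "measure M {\<omega>\<in>space M. P \<omega>} \<le> measure M {\<omega>\<in>space M. Q \<omega>} + measure M {\<omega>\<in>space M. R \<omega>}"
proof -
  have "measure M {\<omega>\<in>space M. P \<omega>} \<le> measure M ({\<omega>\<in>space M. Q \<omega>} \<union> {\<omega>\<in>space M. R \<omega>})"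
    by (rule finite_measure_mono) (use assms in auto)
  also have "\<dots> \<le> measure M {\<omega>\<in>space M. Q \<omega>} + measure M {\<omega>\<in>space M. R \<omega>}"
    by (rule measure_Un_le) (use assms in auto)
  finally show ?thesis .
qed

lemma (in finite_measure) measure_abs_gt_le_second_moment:
  assumes "X \<in> borel_measurable M" "integrable M (\<lambda>\<omega>. (X \<omega>)^2)" "e > 0"
  shows "measure M {\<omega> \<in> space M. e < \<bar>X \<omega>\<bar>} \<le> (\<integral>\<omega>. (X \<omega>)^2 \<partial>M) / e^2"
proof -
  have "measure M {\<omega> \<in> space M. e < \<bar>X \<omega>\<bar>} \<le> measure M {\<omega> \<in> space M. \<bar>X \<omega>\<bar> \<ge> e}"
    by (rule measure_Collect_mono_pred) (use assms(1) in auto)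
  also have "\<dots> \<le> (\<integral>\<omega>. (X \<omega>)^2 \<partial>M) / e^2"
    by (rule second_moment_method) (use assms in auto)
  finally show ?thesis .
qed

lemma (in prob_space) integral_lipschitz_diff_le:
  fixes f :: "real \<Rightarrow> real"
  assumes [measurable]: "S \<in> borel_measurable M" "T \<in> borel_measurable M" "f \<in> borel_measurable borel"
    and bound: "\<And>z. \<bar>f z\<bar> \<le> 1" and L: "L \<ge> 0" and lip: "\<And>a b. \<bar>f a - f b\<bar> \<le> L * \<bar>a - b\<bar>"
    and \<delta>: "\<delta> \<ge> 0"
  shows "\<bar>(\<integral>\<omega>. f (S \<omega>) \<partial>M) - (\<integral>\<omega>. f (T \<omega>) \<partial>M)\<bar> \<le> L * \<delta> + 2 * prob {\<omega> \<in> space M. \<delta> < \<bar>S \<omega> - T \<omega>\<bar>}"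
proof -
  define B where "B = {\<omega> \<in> space M. \<delta> < \<bar>S \<omega> - T \<omega>\<bar>}"
  have [measurable]: "B \<in> events" unfolding B_def by measurable
  have int_S: "integrable M (\<lambda>\<omega>. f (S \<omega>))" and int_T: "integrable M (\<lambda>\<omega>. f (T \<omega>))"
    by (intro integrable_const_bound[where B=1]; simp add: bound)+
  have int_B: "integrable M (\<lambda>\<omega>. L * \<delta> + 2 * indicator B \<omega>)"
    by (rule integrable_const_bound[where B="L * \<delta> + 2"]) (use L \<delta> in \<open>auto simp: indicator_def\<close>)
  have "\<bar>(\<integral>\<omega>. f (S \<omega>) \<partial>M) - (\<integral>\<omega>. f (T \<omega>) \<partial>M)\<bar> = \<bar>\<integral>\<omega>. f (S \<omega>) - f (T \<omega>) \<partial>M\<bar>"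
    using int_S int_T by simp
  also have "\<dots> \<le> (\<integral>\<omega>. \<bar>f (S \<omega>) - f (T \<omega>)\<bar> \<partial>M)"
    by (rule integral_abs_bound)
  also have "\<dots> \<le> (\<integral>\<omega>. L * \<delta> + 2 * indicator B \<omega> \<partial>M)"
  proof (rule integral_mono[OF _ int_B])
    show "integrable M (\<lambda>\<omega>. \<bar>f (S \<omega>) - f (T \<omega>)\<bar>)" using int_S int_T by auto
    fix \<omega> assume \<omega>: "\<omega> \<in> space M"
    show "\<bar>f (S \<omega>) - f (T \<omega>)\<bar> \<le> L * \<delta> + 2 * indicator B \<omega>"
    proof (cases "\<omega> \<in> B")
      case True
      have "\<bar>f (S \<omega>) - f (T \<omega>)\<bar> \<le> 2" using bound[of "S \<omega>"] bound[of "T \<omega>"] by linarith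
      moreover have "0 \<le> L * \<delta>" using L \<delta> by simp
      ultimately show ?thesis using True by simp
    next
      case False
      then have "L * \<bar>S \<omega> - T \<omega>\<bar> \<le> L * \<delta>" using \<omega> L by (intro mult_left_mono) (auto simp: B_def)
      then show ?thesis using lip[of "S \<omega>" "T \<omega>"] False by simp
    qed
  qed
  also have "\<dots> = L * \<delta> + 2 * prob B"
    using prob_space by (simp add: Bochner_Integration.integral_add less_top[symmetric])
  finally show ?thesis by (simp add: B_def)
qed

lemma (in prob_space) indep_sets_reindex:
  assumes "indep_sets F (f ` I)" "inj_on f I"
  shows "indep_sets (\<lambda>i. F (f i)) I"
  unfolding indep_sets_def
proof (intro conjI ballI allI impI)
  fix i assume "i \<in> I" then show "F (f i) \<subseteq> events"
    using assms(1) by (auto simp: indep_sets_def)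
next
  fix J A assume J: "J \<subseteq> I" "J \<noteq> {}" "finite J" and A: "A \<in> (\<Pi> j\<in>J. F (f j))"
  define B where "B k = A (the_inv_into J f k)" for k
  have inj: "inj_on f J" using assms(2) J(1) inj_on_subset by blast
  have BA: "B (f j) = A j" if "j \<in> J" for j using inj that by (simp add: B_def the_inv_into_f_f)
  have "B \<in> (\<Pi> k\<in>f ` J. F k)" using A BA by auto
  then have "prob (\<Inter>k\<in>f ` J. B k) = (\<Prod>k\<in>f ` J. prob (B k))"
    using assms(1) J unfolding indep_sets_def by (metis finite_imageI image_is_empty image_mono)
  moreover have "(\<Inter>k\<in>f ` J. B k) = (\<Inter>j\<in>J. A j)" using BA by auto
  moreover have "(\<Prod>k\<in>f ` J. prob (B k)) = (\<Prod>j\<in>J. prob (A j))"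
    using inj BA by (simp add: prod.reindex)
  ultimately show "prob (\<Inter>j\<in>J. A j) = (\<Prod>j\<in>J. prob (A j))" by simp
qed

lemma (in prob_space) indep_vars_case_sum_Inl:
  assumes "indep_vars N (case_sum X Z) (Inl ` I \<union> Inr ` J)"
  shows "indep_vars (N \<circ> Inl) X I"
proof -
  have "indep_vars N (case_sum X Z) (Inl ` I)"
    using assms by (rule indep_vars_subset) auto
  then show ?thesis
    unfolding indep_vars_def2
    using indep_sets_reindex[of "\<lambda>i. {case_sum X Z i -` A \<inter> space M |A. A \<in> sets (N i)}" Inl I]
    by auto
qed

lemma (in prob_space) indep_zero_mean_square_sum:
  fixes G :: "'i \<Rightarrow> 'a \<Rightarrow> real"
  assumes I: "finite I" and ind: "indep_vars (\<lambda>_. borel) G I"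
    and sq: "\<And>i. i \<in> I \<Longrightarrow> integrable M (\<lambda>\<omega>. (G i \<omega>)^2)"
    and zero_mean: "\<And>i. i \<in> I \<Longrightarrow> expectation (G i) = 0"
  shows "integrable M (\<lambda>\<omega>. (\<Sum>i\<in>I. G i \<omega>)^2)"
    and "expectation (\<lambda>\<omega>. (\<Sum>i\<in>I. G i \<omega>)^2) = (\<Sum>i\<in>I. expectation (\<lambda>\<omega>. (G i \<omega>)^2))"
proof -
  have int: "integrable M (G i)" if "i \<in> I" for i
    using ind that sq[OF that] by (auto simp: indep_vars_def intro: square_integrable_imp_integrable)
  have expand: "(\<lambda>\<omega>. (\<Sum>i\<in>I. G i \<omega>)^2) = (\<lambda>\<omega>. \<Sum>i\<in>I. \<Sum>j\<in>I. G i \<omega> * G j \<omega>)"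
    by (simp add: power2_eq_square sum_product)
  have cross: "integrable M (\<lambda>\<omega>. G i \<omega> * G j \<omega>) \<and>
      expectation (\<lambda>\<omega>. G i \<omega> * G j \<omega>) = (if i = j then expectation (\<lambda>\<omega>. (G i \<omega>)^2) else 0)"
    if ij: "i \<in> I" "j \<in> I" for i j
  proof (cases "i = j")
    case True then show ?thesis using sq[OF ij(1)] by (simp add: power2_eq_square)
  next
    case False
    have ind2: "indep_vars (\<lambda>_. borel) G {i, j}"
      using ind by (rule indep_vars_subset) (use ij in auto)
    have "integrable M (\<lambda>\<omega>. \<Prod>k\<in>{i,j}. G k \<omega>)"
      by (rule indep_vars_integrable[OF _ ind2]) (use int ij in auto)
    moreover have "expectation (\<lambda>\<omega>. \<Prod>k\<in>{i,j}. G k \<omega>) = (\<Prod>k\<in>{i,j}. expectation (G k))"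
      by (rule indep_vars_lebesgue_integral[OF _ ind2]) (use int ij in auto)
    ultimately show ?thesis using False zero_mean ij by simp
  qed
  show "integrable M (\<lambda>\<omega>. (\<Sum>i\<in>I. G i \<omega>)^2)"
    unfolding expand using cross by (intro Bochner_Integration.integrable_sum) auto
  have "expectation (\<lambda>\<omega>. (\<Sum>i\<in>I. G i \<omega>)^2) = (\<Sum>i\<in>I. \<Sum>j\<in>I. expectation (\<lambda>\<omega>. G i \<omega> * G j \<omega>))"
    unfolding expand using cross
    by (simp add: Bochner_Integration.integral_sum Bochner_Integration.integrable_sum)
  also have "\<dots> = (\<Sum>i\<in>I. \<Sum>j\<in>I. if i = j then expectation (\<lambda>\<omega>. (G i \<omega>)^2) else 0)"
    using cross by (intro sum.cong) auto
  also have "\<dots> = (\<Sum>i\<in>I. expectation (\<lambda>\<omega>. (G i \<omega>)^2))"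
    using I by simp
  finally show "expectation (\<lambda>\<omega>. (\<Sum>i\<in>I. G i \<omega>)^2) = (\<Sum>i\<in>I. expectation (\<lambda>\<omega>. (G i \<omega>)^2))" .
qed

lemma (in prob_space) normal_centered_power:
  assumes D: "distributed M lborel X (normal_density \<mu> \<sigma>)" and \<sigma>: "\<sigma> > 0"
  shows "integrable M (\<lambda>\<omega>. (X \<omega> - \<mu>)^k)"
    and "expectation (\<lambda>\<omega>. (X \<omega> - \<mu>)^k) = (\<integral>x. normal_density \<mu> \<sigma> x * (x - \<mu>)^k \<partial>lborel)"
  using distributed_integrable[OF D, of "\<lambda>x. (x - \<mu>)^k"] integrable_normal_moment[OF \<sigma>, of \<mu> k]
    distributed_integral[OF D, of "\<lambda>x. (x - \<mu>)^k"]
  by simp_all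

lemma (in prob_space) normal_centered_moments:
  assumes D: "distributed M lborel X (normal_density \<mu> \<sigma>)" and \<sigma>: "\<sigma> > 0"
  shows "expectation (\<lambda>\<omega>. X \<omega> - \<mu>) = 0"
    and "expectation (\<lambda>\<omega>. (X \<omega> - \<mu>)^2) = \<sigma>^2"
    and "expectation (\<lambda>\<omega>. (X \<omega> - \<mu>)^4) = 3 * \<sigma>^4"
  using normal_centered_power(2)[OF D \<sigma>, of 1] integral_normal_moment_odd[OF \<sigma>, of \<mu> 0]
    normal_centered_power(2)[OF D \<sigma>, of 2] integral_normal_moment_even[OF \<sigma>, of \<mu> 1]
    normal_centered_power(2)[OF D \<sigma>, of 4] integral_normal_moment_even[OF \<sigma>, of \<mu> 2]
  by (simp_all add: numeral_eq_Suc power_divide field_simps)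

lemma (in prob_space) weighted_sum_indep_normal:
  fixes c \<mu> :: "'i \<Rightarrow> real"
  assumes I: "finite I" and ind: "indep_vars (\<lambda>_. borel) X I"
    and normal: "\<And>i. i \<in> I \<Longrightarrow> distributed M lborel (X i) (normal_density (\<mu> i) \<sigma>)" and \<sigma>: "\<sigma> > 0"
    and nonzero: "\<exists>i\<in>I. c i \<noteq> 0"
  shows "distributed M lborel (\<lambda>\<omega>. \<Sum>i\<in>I. c i * X i \<omega>)
           (normal_density (\<Sum>i\<in>I. c i * \<mu> i) (\<sigma> * sqrt (\<Sum>i\<in>I. (c i)^2)))"
proof -
  define J where "J = {i \<in> I. c i \<noteq> 0}"
  have J: "finite J" "J \<noteq> {}" "J \<subseteq> I" using I nonzero by (auto simp: J_def)
  have drop: "(\<Sum>i\<in>I. f i) = (\<Sum>i\<in>J. f i)" if "\<And>i. i \<in> I \<Longrightarrow> c i = 0 \<Longrightarrow> f i = 0" for f :: "'i \<Rightarrow> real"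
    using I that by (intro sum.mono_neutral_right) (auto simp: J_def)
  have "distributed M lborel (\<lambda>\<omega>. \<Sum>i\<in>J. c i * X i \<omega>)
      (normal_density (\<Sum>i\<in>J. c i * \<mu> i) (sqrt (\<Sum>i\<in>J. (\<bar>c i\<bar> * \<sigma>)^2)))"
  proof (rule sum_indep_normal[OF J(1,2)])
    show "indep_vars (\<lambda>_. borel) (\<lambda>i \<omega>. c i * X i \<omega>) J"
      using indep_vars_subset[OF ind J(3)] by (rule indep_vars_compose2) auto
    show "0 < \<bar>c i\<bar> * \<sigma>" if "i \<in> J" for i using that \<sigma> by (auto simp: J_def)
    show "distributed M lborel (\<lambda>\<omega>. c i * X i \<omega>) (normal_density (c i * \<mu> i) (\<bar>c i\<bar> * \<sigma>))"
      if "i \<in> J" for i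
      using normal_density_affine[OF normal \<sigma>, of i "c i" 0] that by (auto simp: J_def)
  qed
  moreover have "(\<lambda>\<omega>. \<Sum>i\<in>I. c i * X i \<omega>) = (\<lambda>\<omega>. \<Sum>i\<in>J. c i * X i \<omega>)"
    by (intro ext drop) simp
  moreover have "sqrt (\<Sum>i\<in>J. (\<bar>c i\<bar> * \<sigma>)^2) = \<sigma> * sqrt (\<Sum>i\<in>I. (c i)^2)"
    using \<sigma> by (simp add: drop[of "\<lambda>i. (c i)^2"] power_mult_distrib sum_distrib_right[symmetric] real_sqrt_mult)
  ultimately show ?thesis by (simp add: drop[of "\<lambda>i. c i * \<mu> i"])
qed

section \<open>Convergence and boundedness in probability\<close>

locale prob_space_sequence =
  fixes M :: "nat \<Rightarrow> 'a measure"
  assumes eventually_prob_space: "\<forall>\<^sub>F n in sequentially. prob_space (M n)"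
begin

definition conv_in_prob :: "(nat \<Rightarrow> 'a \<Rightarrow> real) \<Rightarrow> real \<Rightarrow> bool" where
  "conv_in_prob X c \<longleftrightarrow> (\<forall>\<^sub>F n in sequentially. X n \<in> borel_measurable (M n)) \<and>
     (\<forall>e>0. (\<lambda>n. measure (M n) {\<omega> \<in> space (M n). e < \<bar>X n \<omega> - c\<bar>}) \<longlonglongrightarrow> 0)"

definition bdd_in_prob :: "(nat \<Rightarrow> 'a \<Rightarrow> real) \<Rightarrow> bool" where
  "bdd_in_prob X \<longleftrightarrow> (\<forall>\<^sub>F n in sequentially. X n \<in> borel_measurable (M n)) \<and>
     (\<forall>d>0. \<exists>K. \<forall>\<^sub>F n in sequentially. measure (M n) {\<omega> \<in> space (M n). K < \<bar>X n \<omega>\<bar>} \<le> d)"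

lemma conv_in_prob_measurable:
  "conv_in_prob X c \<Longrightarrow> \<forall>\<^sub>F n in sequentially. X n \<in> borel_measurable (M n)"
  by (simp add: conv_in_prob_def)

lemma conv_in_prob_tendsto:
  "conv_in_prob X c \<Longrightarrow> e > 0 \<Longrightarrow> (\<lambda>n. measure (M n) {\<omega> \<in> space (M n). e < \<bar>X n \<omega> - c\<bar>}) \<longlonglongrightarrow> 0"
  by (simp add: conv_in_prob_def)

lemma bdd_in_prob_measurable:
  "bdd_in_prob X \<Longrightarrow> \<forall>\<^sub>F n in sequentially. X n \<in> borel_measurable (M n)"
  by (simp add: bdd_in_prob_def)

lemma conv_in_prob_cong:
  assumes "conv_in_prob X c" "\<forall>\<^sub>F n in sequentially. \<forall>\<omega>\<in>space (M n). X n \<omega> = X' n \<omega>" "c = c'"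
  shows "conv_in_prob X' c'"
proof -
  have "\<forall>\<^sub>F n in sequentially. X' n \<in> borel_measurable (M n)"
    using conv_in_prob_measurable[OF assms(1)] assms(2)
    by eventually_elim (metis measurable_cong)
  moreover have "(\<lambda>n. measure (M n) {\<omega> \<in> space (M n). e < \<bar>X' n \<omega> - c\<bar>}) \<longlonglongrightarrow> 0" if "e > 0" for e
  proof -
    have "\<forall>\<^sub>F n in sequentially. measure (M n) {\<omega> \<in> space (M n). e < \<bar>X n \<omega> - c\<bar>}
            = measure (M n) {\<omega> \<in> space (M n). e < \<bar>X' n \<omega> - c\<bar>}"
      using assms(2) by eventually_elim (intro arg_cong[where f="measure _"], auto)
    with conv_in_prob_tendsto[OF assms(1) that] show ?thesis by (rule Lim_transform_eventually)
  qed
  ultimately show ?thesis using assms(3) by (simp add: conv_in_prob_def)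
qed

lemma bdd_in_prob_cong:
  assumes "bdd_in_prob X" "\<forall>\<^sub>F n in sequentially. \<forall>\<omega>\<in>space (M n). X n \<omega> = X' n \<omega>"
  shows "bdd_in_prob X'"
proof -
  have "\<forall>\<^sub>F n in sequentially. X' n \<in> borel_measurable (M n)"
    using bdd_in_prob_measurable[OF assms(1)] assms(2)
    by eventually_elim (metis measurable_cong)
  moreover have "\<exists>K. \<forall>\<^sub>F n in sequentially. measure (M n) {\<omega> \<in> space (M n). K < \<bar>X' n \<omega>\<bar>} \<le> d"
    if "d > 0" for d
  proof -
    obtain K where K: "\<forall>\<^sub>F n in sequentially. measure (M n) {\<omega> \<in> space (M n). K < \<bar>X n \<omega>\<bar>} \<le> d"
      using assms(1) \<open>d > 0\<close> unfolding bdd_in_prob_def by blast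
    have "\<forall>\<^sub>F n in sequentially. measure (M n) {\<omega> \<in> space (M n). K < \<bar>X' n \<omega>\<bar>} \<le> d"
      using K assms(2)
    proof eventually_elim
      case (elim n)
      then have "{\<omega> \<in> space (M n). K < \<bar>X' n \<omega>\<bar>} = {\<omega> \<in> space (M n). K < \<bar>X n \<omega>\<bar>}" by auto
      then show ?case using elim by simp
    qed
    then show ?thesis by blast
  qed
  ultimately show ?thesis by (simp add: bdd_in_prob_def)
qed

lemma conv_in_prob_const:
  assumes "a \<longlonglongrightarrow> c"
  shows "conv_in_prob (\<lambda>n \<omega>. a n) c"
  unfolding conv_in_prob_def
proof (intro conjI allI impI)
  show "\<forall>\<^sub>F n in sequentially. (\<lambda>\<omega>. a n) \<in> borel_measurable (M n)" by simp
  fix e :: real assume "e > 0"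
  then have "\<forall>\<^sub>F n in sequentially. dist (a n) c < e" using assms by (simp add: tendsto_iff)
  then have "\<forall>\<^sub>F n in sequentially. 0 = measure (M n) {\<omega> \<in> space (M n). e < \<bar>a n - c\<bar>}"
    by eventually_elim (auto simp: dist_real_def)
  then show "(\<lambda>n. measure (M n) {\<omega> \<in> space (M n). e < \<bar>a n - c\<bar>}) \<longlonglongrightarrow> 0"
    by (rule Lim_transform_eventually[OF tendsto_const])
qed

lemma conv_in_prob_iff_zero: "conv_in_prob X c \<longleftrightarrow> conv_in_prob (\<lambda>n \<omega>. X n \<omega> - c) 0"
proof -
  have "X n \<in> borel_measurable (M n) \<longleftrightarrow> (\<lambda>\<omega>. X n \<omega> - c) \<in> borel_measurable (M n)" for n
  proof
    assume "(\<lambda>\<omega>. X n \<omega> - c) \<in> borel_measurable (M n)"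
    then have "(\<lambda>\<omega>. (X n \<omega> - c) + c) \<in> borel_measurable (M n)"
      by (intro borel_measurable_add) auto
    then show "X n \<in> borel_measurable (M n)" by simp
  qed (auto intro!: borel_measurable_diff)
  then show ?thesis by (simp add: conv_in_prob_def)
qed

lemma conv_in_prob_zeroI:
  assumes meas: "\<forall>\<^sub>F n in sequentially. X n \<in> borel_measurable (M n)"
    and small: "\<And>e d. e > 0 \<Longrightarrow> d > 0 \<Longrightarrow>
      \<forall>\<^sub>F n in sequentially. measure (M n) {\<omega> \<in> space (M n). e < \<bar>X n \<omega>\<bar>} \<le> d"
  shows "conv_in_prob X 0"
  unfolding conv_in_prob_def
proof (intro conjI meas allI impI)
  fix e :: real assume e: "e > 0"
  show "(\<lambda>n. measure (M n) {\<omega> \<in> space (M n). e < \<bar>X n \<omega> - 0\<bar>}) \<longlonglongrightarrow> 0"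
  proof (rule tendstoI)
    fix d :: real assume "d > 0"
    then show "\<forall>\<^sub>F n in sequentially. dist (measure (M n) {\<omega> \<in> space (M n). e < \<bar>X n \<omega> - 0\<bar>}) 0 < d"
      using small[OF e, of "d/2"] by (auto simp: dist_real_def elim: eventually_mono)
  qed
qed

lemma conv_in_prob_zeroD:
  assumes "conv_in_prob X 0" "e > 0" "d > 0"
  shows "\<forall>\<^sub>F n in sequentially. measure (M n) {\<omega> \<in> space (M n). e < \<bar>X n \<omega>\<bar>} \<le> d"
  using tendstoD[OF conv_in_prob_tendsto[OF assms(1,2)] assms(3)]
  by eventually_elim (auto simp: dist_real_def)

lemma bdd_in_probD:
  assumes "bdd_in_prob X" "d > 0"
  obtains K where "K > 0" "\<forall>\<^sub>F n in sequentially. measure (M n) {\<omega> \<in> space (M n). K < \<bar>X n \<omega>\<bar>} \<le> d"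
proof -
  obtain K where K: "\<forall>\<^sub>F n in sequentially. measure (M n) {\<omega> \<in> space (M n). K < \<bar>X n \<omega>\<bar>} \<le> d"
    using assms unfolding bdd_in_prob_def by blast
  have "\<forall>\<^sub>F n in sequentially. measure (M n) {\<omega> \<in> space (M n). \<bar>K\<bar> + 1 < \<bar>X n \<omega>\<bar>} \<le> d"
    using K bdd_in_prob_measurable[OF assms(1)] eventually_prob_space
  proof eventually_elim
    case (elim n)
    interpret P: prob_space "M n" by (fact elim(3))
    have [measurable]: "X n \<in> borel_measurable (M n)" by (fact elim(2))
    have "measure (M n) {\<omega> \<in> space (M n). \<bar>K\<bar> + 1 < \<bar>X n \<omega>\<bar>}
            \<le> measure (M n) {\<omega> \<in> space (M n). K < \<bar>X n \<omega>\<bar>}"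
      by (rule P.measure_Collect_mono_pred) (linarith, measurable)
    with elim(1) show ?case by linarith
  qed
  then show ?thesis by (intro that[of "\<bar>K\<bar> + 1"]) auto
qed

lemma bdd_in_probI:
  assumes meas: "\<forall>\<^sub>F n in sequentially. X n \<in> borel_measurable (M n)"
    and small: "\<And>d. d > 0 \<Longrightarrow> \<exists>K. \<forall>\<^sub>F n in sequentially. measure (M n) {\<omega> \<in> space (M n). K < \<bar>X n \<omega>\<bar>} \<le> d"
  shows "bdd_in_prob X"
  using assms by (simp add: bdd_in_prob_def)

lemma eventually_measure_abs_gt_le_add:
  fixes X Y W :: "nat \<Rightarrow> 'a \<Rightarrow> real"
  assumes X: "\<forall>\<^sub>F n in sequentially. X n \<in> borel_measurable (M n)"
    and Y: "\<forall>\<^sub>F n in sequentially. Y n \<in> borel_measurable (M n)"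
    and split: "\<And>n \<omega>. e < \<bar>W n \<omega>\<bar> \<Longrightarrow> a < \<bar>X n \<omega>\<bar> \<or> b < \<bar>Y n \<omega>\<bar>"
  shows "\<forall>\<^sub>F n in sequentially. measure (M n) {\<omega> \<in> space (M n). e < \<bar>W n \<omega>\<bar>} \<le>
    measure (M n) {\<omega> \<in> space (M n). a < \<bar>X n \<omega>\<bar>} + measure (M n) {\<omega> \<in> space (M n). b < \<bar>Y n \<omega>\<bar>}"
  using X Y eventually_prob_space
proof eventually_elim
  case (elim n)
  interpret P: prob_space "M n" by (fact elim(3))
  have [measurable]: "X n \<in> borel_measurable (M n)" "Y n \<in> borel_measurable (M n)"
    by (fact elim(1,2))+
  have "{\<omega> \<in> space (M n). a < \<bar>X n \<omega>\<bar>} \<in> sets (M n)" "{\<omega> \<in> space (M n). b < \<bar>Y n \<omega>\<bar>} \<in> sets (M n)"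
    by measurable measurable
  then show ?case using split by (intro P.measure_Collect_disj_le) auto
qed

lemma conv_in_prob_add:
  assumes X: "conv_in_prob X a" and Y: "conv_in_prob Y b"
  shows "conv_in_prob (\<lambda>n \<omega>. X n \<omega> + Y n \<omega>) (a + b)"
proof -
  have X0: "conv_in_prob (\<lambda>n \<omega>. X n \<omega> - a) 0" and Y0: "conv_in_prob (\<lambda>n \<omega>. Y n \<omega> - b) 0"
    using X Y conv_in_prob_iff_zero by blast+
  have "conv_in_prob (\<lambda>n \<omega>. (X n \<omega> - a) + (Y n \<omega> - b)) 0"
  proof (rule conv_in_prob_zeroI)
    show "\<forall>\<^sub>F n in sequentially. (\<lambda>\<omega>. (X n \<omega> - a) + (Y n \<omega> - b)) \<in> borel_measurable (M n)"
      using conv_in_prob_measurable[OF X0] conv_in_prob_measurable[OF Y0]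
      by eventually_elim (rule borel_measurable_add)
    fix e d :: real assume "e > 0" "d > 0"
    have "\<forall>\<^sub>F n in sequentially. measure (M n) {\<omega> \<in> space (M n). e < \<bar>(X n \<omega> - a) + (Y n \<omega> - b)\<bar>} \<le>
      measure (M n) {\<omega> \<in> space (M n). e/2 < \<bar>X n \<omega> - a\<bar>} + measure (M n) {\<omega> \<in> space (M n). e/2 < \<bar>Y n \<omega> - b\<bar>}"
      by (rule eventually_measure_abs_gt_le_add[OF conv_in_prob_measurable[OF X0] conv_in_prob_measurable[OF Y0]])
        arith
    moreover have "\<forall>\<^sub>F n in sequentially. measure (M n) {\<omega> \<in> space (M n). e/2 < \<bar>X n \<omega> - a\<bar>} \<le> d/2"
      and "\<forall>\<^sub>F n in sequentially. measure (M n) {\<omega> \<in> space (M n). e/2 < \<bar>Y n \<omega> - b\<bar>} \<le> d/2"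
      by (rule conv_in_prob_zeroD[OF X0] conv_in_prob_zeroD[OF Y0]; use \<open>e > 0\<close> \<open>d > 0\<close> in simp)+
    ultimately show "\<forall>\<^sub>F n in sequentially. measure (M n) {\<omega> \<in> space (M n). e < \<bar>(X n \<omega> - a) + (Y n \<omega> - b)\<bar>} \<le> d"
      by eventually_elim linarith
  qed
  then show ?thesis by (subst conv_in_prob_iff_zero) (simp add: algebra_simps)
qed

lemma conv_in_prob_imp_bdd_in_prob:
  assumes "conv_in_prob X c"
  shows "bdd_in_prob X"
proof (rule bdd_in_probI[OF conv_in_prob_measurable[OF assms]])
  fix d :: real assume d: "d > 0"
  have "\<forall>\<^sub>F n in sequentially. measure (M n) {\<omega> \<in> space (M n). 1 < \<bar>X n \<omega> - c\<bar>} \<le> d"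
    by (rule conv_in_prob_zeroD[OF iffD1[OF conv_in_prob_iff_zero assms]]) (use d in simp_all)
  then have "\<forall>\<^sub>F n in sequentially. measure (M n) {\<omega> \<in> space (M n). \<bar>c\<bar> + 1 < \<bar>X n \<omega>\<bar>} \<le> d"
    using conv_in_prob_measurable[OF assms] eventually_prob_space
  proof eventually_elim
    case (elim n)
    interpret P: prob_space "M n" by (fact elim(3))
    have [measurable]: "X n \<in> borel_measurable (M n)" by (fact elim(2))
    have "measure (M n) {\<omega> \<in> space (M n). \<bar>c\<bar> + 1 < \<bar>X n \<omega>\<bar>}
            \<le> measure (M n) {\<omega> \<in> space (M n). 1 < \<bar>X n \<omega> - c\<bar>}"
      by (rule P.measure_Collect_mono_pred) (linarith, measurable)
    with elim(1) show ?case by linarith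
  qed
  then show "\<exists>K. \<forall>\<^sub>F n in sequentially. measure (M n) {\<omega> \<in> space (M n). K < \<bar>X n \<omega>\<bar>} \<le> d" by blast
qed

lemma conv_in_prob_zero_mult_bdd:
  assumes X: "bdd_in_prob X" and Y: "conv_in_prob Y 0"
  shows "conv_in_prob (\<lambda>n \<omega>. X n \<omega> * Y n \<omega>) 0"
proof (rule conv_in_prob_zeroI)
  show "\<forall>\<^sub>F n in sequentially. (\<lambda>\<omega>. X n \<omega> * Y n \<omega>) \<in> borel_measurable (M n)"
    using bdd_in_prob_measurable[OF X] conv_in_prob_measurable[OF Y] by eventually_elim measurable
  fix e d :: real assume e: "e > 0" and d: "d > 0"
  obtain K where K: "K > 0" "\<forall>\<^sub>F n in sequentially. measure (M n) {\<omega> \<in> space (M n). K < \<bar>X n \<omega>\<bar>} \<le> d/2"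
    using bdd_in_probD[OF X, of "d/2"] d by auto
  have "\<forall>\<^sub>F n in sequentially. measure (M n) {\<omega> \<in> space (M n). e < \<bar>X n \<omega> * Y n \<omega>\<bar>} \<le>
    measure (M n) {\<omega> \<in> space (M n). K < \<bar>X n \<omega>\<bar>} + measure (M n) {\<omega> \<in> space (M n). e/K < \<bar>Y n \<omega>\<bar>}"
  proof (rule eventually_measure_abs_gt_le_add[OF bdd_in_prob_measurable[OF X] conv_in_prob_measurable[OF Y]])
    fix n \<omega> assume gt: "e < \<bar>X n \<omega> * Y n \<omega>\<bar>"
    show "K < \<bar>X n \<omega>\<bar> \<or> e / K < \<bar>Y n \<omega>\<bar>"
    proof (rule ccontr)
      assume "\<not> ?thesis"
      then have "\<bar>X n \<omega>\<bar> * \<bar>Y n \<omega>\<bar> \<le> K * (e/K)" by (intro mult_mono) auto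
      with gt K(1) show False by (simp add: abs_mult)
    qed
  qed
  moreover have "\<forall>\<^sub>F n in sequentially. measure (M n) {\<omega> \<in> space (M n). e/K < \<bar>Y n \<omega>\<bar>} \<le> d/2"
    by (rule conv_in_prob_zeroD[OF Y]) (use e d K(1) in simp_all)
  ultimately show "\<forall>\<^sub>F n in sequentially. measure (M n) {\<omega> \<in> space (M n). e < \<bar>X n \<omega> * Y n \<omega>\<bar>} \<le> d"
    using K(2) by eventually_elim linarith
qed

lemma bdd_in_prob_add:
  assumes X: "bdd_in_prob X" and Y: "bdd_in_prob Y"
  shows "bdd_in_prob (\<lambda>n \<omega>. X n \<omega> + Y n \<omega>)"
proof (rule bdd_in_probI)
  show "\<forall>\<^sub>F n in sequentially. (\<lambda>\<omega>. X n \<omega> + Y n \<omega>) \<in> borel_measurable (M n)"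
    using bdd_in_prob_measurable[OF X] bdd_in_prob_measurable[OF Y] by eventually_elim measurable
  fix d :: real assume d: "d > 0"
  obtain K where K: "\<forall>\<^sub>F n in sequentially. measure (M n) {\<omega> \<in> space (M n). K < \<bar>X n \<omega>\<bar>} \<le> d/2"
    using bdd_in_probD[OF X, of "d/2"] d by auto
  obtain L where L: "\<forall>\<^sub>F n in sequentially. measure (M n) {\<omega> \<in> space (M n). L < \<bar>Y n \<omega>\<bar>} \<le> d/2"
    using bdd_in_probD[OF Y, of "d/2"] d by auto
  have "\<forall>\<^sub>F n in sequentially. measure (M n) {\<omega> \<in> space (M n). K + L < \<bar>X n \<omega> + Y n \<omega>\<bar>} \<le>
    measure (M n) {\<omega> \<in> space (M n). K < \<bar>X n \<omega>\<bar>} + measure (M n) {\<omega> \<in> space (M n). L < \<bar>Y n \<omega>\<bar>}"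
    by (rule eventually_measure_abs_gt_le_add[OF bdd_in_prob_measurable[OF X] bdd_in_prob_measurable[OF Y]])
      arith
  with K L have "\<forall>\<^sub>F n in sequentially. measure (M n) {\<omega> \<in> space (M n). K + L < \<bar>X n \<omega> + Y n \<omega>\<bar>} \<le> d"
    by eventually_elim linarith
  then show "\<exists>K. \<forall>\<^sub>F n in sequentially. measure (M n) {\<omega> \<in> space (M n). K < \<bar>X n \<omega> + Y n \<omega>\<bar>} \<le> d"
    by blast
qed

lemma bdd_in_prob_mult:
  assumes X: "bdd_in_prob X" and Y: "bdd_in_prob Y"
  shows "bdd_in_prob (\<lambda>n \<omega>. X n \<omega> * Y n \<omega>)"
proof (rule bdd_in_probI)
  show "\<forall>\<^sub>F n in sequentially. (\<lambda>\<omega>. X n \<omega> * Y n \<omega>) \<in> borel_measurable (M n)"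
    using bdd_in_prob_measurable[OF X] bdd_in_prob_measurable[OF Y] by eventually_elim measurable
  fix d :: real assume d: "d > 0"
  obtain K where K: "K > 0" "\<forall>\<^sub>F n in sequentially. measure (M n) {\<omega> \<in> space (M n). K < \<bar>X n \<omega>\<bar>} \<le> d/2"
    using bdd_in_probD[OF X, of "d/2"] d by auto
  obtain L where L: "L > 0" "\<forall>\<^sub>F n in sequentially. measure (M n) {\<omega> \<in> space (M n). L < \<bar>Y n \<omega>\<bar>} \<le> d/2"
    using bdd_in_probD[OF Y, of "d/2"] d by auto
  have "\<forall>\<^sub>F n in sequentially. measure (M n) {\<omega> \<in> space (M n). K * L < \<bar>X n \<omega> * Y n \<omega>\<bar>} \<le>
    measure (M n) {\<omega> \<in> space (M n). K < \<bar>X n \<omega>\<bar>} + measure (M n) {\<omega> \<in> space (M n). L < \<bar>Y n \<omega>\<bar>}"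
  proof (rule eventually_measure_abs_gt_le_add[OF bdd_in_prob_measurable[OF X] bdd_in_prob_measurable[OF Y]])
    fix n \<omega> assume gt: "K * L < \<bar>X n \<omega> * Y n \<omega>\<bar>"
    show "K < \<bar>X n \<omega>\<bar> \<or> L < \<bar>Y n \<omega>\<bar>"
    proof (rule ccontr)
      assume "\<not> ?thesis"
      then have "\<bar>X n \<omega>\<bar> * \<bar>Y n \<omega>\<bar> \<le> K * L" by (intro mult_mono) (use K L in auto)
      with gt show False by (simp add: abs_mult)
    qed
  qed
  with K(2) L(2) have "\<forall>\<^sub>F n in sequentially. measure (M n) {\<omega> \<in> space (M n). K * L < \<bar>X n \<omega> * Y n \<omega>\<bar>} \<le> d"
    by eventually_elim linarith
  then show "\<exists>K. \<forall>\<^sub>F n in sequentially. measure (M n) {\<omega> \<in> space (M n). K < \<bar>X n \<omega> * Y n \<omega>\<bar>} \<le> d"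
    by blast
qed

lemma conv_in_prob_mult:
  assumes X: "conv_in_prob X a" and Y: "conv_in_prob Y b"
  shows "conv_in_prob (\<lambda>n \<omega>. X n \<omega> * Y n \<omega>) (a * b)"
proof -
  have X0: "conv_in_prob (\<lambda>n \<omega>. X n \<omega> - a) 0" and Y0: "conv_in_prob (\<lambda>n \<omega>. Y n \<omega> - b) 0"
    using X Y conv_in_prob_iff_zero by blast+
  have "conv_in_prob (\<lambda>n \<omega>. Y n \<omega> * (X n \<omega> - a) + a * (Y n \<omega> - b)) (0 + 0)"
    by (intro conv_in_prob_add conv_in_prob_zero_mult_bdd X0 Y0 conv_in_prob_imp_bdd_in_prob[OF Y]
        conv_in_prob_imp_bdd_in_prob[OF conv_in_prob_const[OF tendsto_const]])
  then show ?thesis by (subst conv_in_prob_iff_zero) (simp add: algebra_simps)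
qed

lemma conv_in_prob_diff:
  assumes "conv_in_prob X a" "conv_in_prob Y b"
  shows "conv_in_prob (\<lambda>n \<omega>. X n \<omega> - Y n \<omega>) (a - b)"
  using conv_in_prob_add[OF assms(1) conv_in_prob_mult[OF conv_in_prob_const[OF tendsto_const] assms(2)],
      of "-1"]
  by simp

lemma conv_in_prob_zero_outside:
  assumes meas: "\<forall>\<^sub>F n in sequentially. X n \<in> borel_measurable (M n)"
    and Q: "\<forall>\<^sub>F n in sequentially. {\<omega> \<in> space (M n). Q n \<omega>} \<in> sets (M n)"
    and outside: "\<forall>\<^sub>F n in sequentially. \<forall>\<omega>\<in>space (M n). X n \<omega> \<noteq> 0 \<longrightarrow> Q n \<omega>"
    and lim: "(\<lambda>n. measure (M n) {\<omega> \<in> space (M n). Q n \<omega>}) \<longlonglongrightarrow> 0"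
  shows "conv_in_prob X 0"
  unfolding conv_in_prob_def
proof (intro conjI meas allI impI)
  fix e :: real assume e: "e > 0"
  have "\<forall>\<^sub>F n in sequentially. norm (measure (M n) {\<omega> \<in> space (M n). e < \<bar>X n \<omega> - 0\<bar>})
          \<le> measure (M n) {\<omega> \<in> space (M n). Q n \<omega>}"
    using Q outside eventually_prob_space
  proof eventually_elim
    case (elim n)
    interpret P: prob_space "M n" by (fact elim(3))
    show ?case using elim e by (simp add: P.measure_Collect_mono_pred)
  qed
  then show "(\<lambda>n. measure (M n) {\<omega> \<in> space (M n). e < \<bar>X n \<omega> - 0\<bar>}) \<longlonglongrightarrow> 0"
    using lim by (rule Lim_null_comparison)
qed

lemma conv_in_prob_cong_nonzero:
  assumes S: "conv_in_prob S s" "s \<noteq> 0" and X: "conv_in_prob X c"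
    and meas: "\<forall>\<^sub>F n in sequentially. X' n \<in> borel_measurable (M n)"
    and eq: "\<forall>\<^sub>F n in sequentially. \<forall>\<omega>\<in>space (M n). S n \<omega> \<noteq> 0 \<longrightarrow> X n \<omega> = X' n \<omega>"
  shows "conv_in_prob X' c"
proof -
  have "conv_in_prob (\<lambda>n \<omega>. X' n \<omega> - X n \<omega>) 0"
  proof (rule conv_in_prob_zero_outside[where Q="\<lambda>n \<omega>. \<bar>s\<bar>/2 < \<bar>S n \<omega> - s\<bar>"])
    show "\<forall>\<^sub>F n in sequentially. (\<lambda>\<omega>. X' n \<omega> - X n \<omega>) \<in> borel_measurable (M n)"
      using meas conv_in_prob_measurable[OF X] by eventually_elim (rule borel_measurable_diff)
    show "\<forall>\<^sub>F n in sequentially. {\<omega> \<in> space (M n). \<bar>s\<bar>/2 < \<bar>S n \<omega> - s\<bar>} \<in> sets (M n)"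
      using conv_in_prob_measurable[OF S(1)] by eventually_elim measurable
    show "\<forall>\<^sub>F n in sequentially. \<forall>\<omega>\<in>space (M n). X' n \<omega> - X n \<omega> \<noteq> 0 \<longrightarrow> \<bar>s\<bar>/2 < \<bar>S n \<omega> - s\<bar>"
      using eq by eventually_elim (use S(2) in force)
    show "(\<lambda>n. measure (M n) {\<omega> \<in> space (M n). \<bar>s\<bar>/2 < \<bar>S n \<omega> - s\<bar>}) \<longlonglongrightarrow> 0"
      using conv_in_prob_tendsto[OF S(1), of "\<bar>s\<bar>/2"] S(2) by simp
  qed
  from conv_in_prob_add[OF this X] show ?thesis by simp
qed

lemma conv_in_prob_zero_second_moment:
  assumes meas: "\<forall>\<^sub>F n in sequentially. X n \<in> borel_measurable (M n)"
    and int: "\<forall>\<^sub>F n in sequentially. integrable (M n) (\<lambda>\<omega>. (X n \<omega>)^2)"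
    and lim: "(\<lambda>n. \<integral>\<omega>. (X n \<omega>)^2 \<partial>M n) \<longlonglongrightarrow> 0"
  shows "conv_in_prob X 0"
  unfolding conv_in_prob_def
proof (intro conjI meas allI impI)
  fix e :: real assume e: "e > 0"
  have "\<forall>\<^sub>F n in sequentially. norm (measure (M n) {\<omega> \<in> space (M n). e < \<bar>X n \<omega> - 0\<bar>})
          \<le> (\<integral>\<omega>. (X n \<omega>)^2 \<partial>M n) / e^2"
    using meas int eventually_prob_space
  proof eventually_elim
    case (elim n)
    interpret P: prob_space "M n" by (fact elim(3))
    show ?case using P.measure_abs_gt_le_second_moment[OF elim(1,2) e] by simp
  qed
  then show "(\<lambda>n. measure (M n) {\<omega> \<in> space (M n). e < \<bar>X n \<omega> - 0\<bar>}) \<longlonglongrightarrow> 0"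
    by (rule Lim_null_comparison) (use lim tendsto_divide_zero in blast)
qed

lemma bdd_in_prob_second_moment:
  assumes meas: "\<forall>\<^sub>F n in sequentially. X n \<in> borel_measurable (M n)"
    and int: "\<forall>\<^sub>F n in sequentially. integrable (M n) (\<lambda>\<omega>. (X n \<omega>)^2)"
    and bnd: "\<forall>\<^sub>F n in sequentially. (\<integral>\<omega>. (X n \<omega>)^2 \<partial>M n) \<le> C"
  shows "bdd_in_prob X"
proof (rule bdd_in_probI[OF meas])
  fix d :: real assume d: "d > 0"
  define K where "K = sqrt ((\<bar>C\<bar> + 1) / d)"
  have K: "K > 0" "K^2 = (\<bar>C\<bar> + 1) / d" using d by (auto simp: K_def)
  have "\<forall>\<^sub>F n in sequentially. measure (M n) {\<omega> \<in> space (M n). K < \<bar>X n \<omega>\<bar>} \<le> d"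
    using meas int bnd eventually_prob_space
  proof eventually_elim
    case (elim n)
    interpret P: prob_space "M n" by (fact elim(4))
    have "measure (M n) {\<omega> \<in> space (M n). K < \<bar>X n \<omega>\<bar>} \<le> (\<integral>\<omega>. (X n \<omega>)^2 \<partial>M n) / K^2"
      by (rule P.measure_abs_gt_le_second_moment[OF elim(1,2) K(1)])
    also have "\<dots> \<le> (\<bar>C\<bar> + 1) / K^2" using elim(3) K d by (intro divide_right_mono) auto
    also have "\<dots> = d" using K d by simp
    finally show ?case .
  qed
  then show "\<exists>K. \<forall>\<^sub>F n in sequentially. measure (M n) {\<omega> \<in> space (M n). K < \<bar>X n \<omega>\<bar>} \<le> d"
    by blast
qed

lemma conv_in_prob_inverse:
  assumes X: "conv_in_prob X a" and a: "a \<noteq> 0"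
  shows "conv_in_prob (\<lambda>n \<omega>. inverse (X n \<omega>)) (inverse a)"
proof -
  have X0: "conv_in_prob (\<lambda>n \<omega>. X n \<omega> - a) 0" using X conv_in_prob_iff_zero by blast
  have "conv_in_prob (\<lambda>n \<omega>. inverse (X n \<omega>) - inverse a) 0"
  proof (rule conv_in_prob_zeroI)
    show "\<forall>\<^sub>F n in sequentially. (\<lambda>\<omega>. inverse (X n \<omega>) - inverse a) \<in> borel_measurable (M n)"
      using conv_in_prob_measurable[OF X]
      by eventually_elim (auto intro!: borel_measurable_diff borel_measurable_inverse)
    fix e d :: real assume e: "e > 0" and d: "d > 0"
    have "\<forall>\<^sub>F n in sequentially. measure (M n) {\<omega> \<in> space (M n). e < \<bar>inverse (X n \<omega>) - inverse a\<bar>} \<le>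
      measure (M n) {\<omega> \<in> space (M n). \<bar>a\<bar>/2 < \<bar>X n \<omega> - a\<bar>}
      + measure (M n) {\<omega> \<in> space (M n). e * a^2 / 2 < \<bar>X n \<omega> - a\<bar>}"
    proof (rule eventually_measure_abs_gt_le_add[OF conv_in_prob_measurable[OF X0] conv_in_prob_measurable[OF X0]])
      fix n \<omega> assume gt: "e < \<bar>inverse (X n \<omega>) - inverse a\<bar>"
      show "\<bar>a\<bar>/2 < \<bar>X n \<omega> - a\<bar> \<or> e * a^2 / 2 < \<bar>X n \<omega> - a\<bar>"
      proof (rule ccontr)
        assume "\<not> ?thesis"
        then have near: "\<bar>X n \<omega> - a\<bar> \<le> \<bar>a\<bar>/2" and close: "\<bar>X n \<omega> - a\<bar> \<le> e * a^2 / 2" by auto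
        have far: "\<bar>X n \<omega>\<bar> \<ge> \<bar>a\<bar>/2" using near by linarith
        then have "X n \<omega> \<noteq> 0" using a by auto
        then have "\<bar>inverse (X n \<omega>) - inverse a\<bar> = \<bar>X n \<omega> - a\<bar> / (\<bar>X n \<omega>\<bar> * \<bar>a\<bar>)"
          using a by (simp add: inverse_diff_inverse abs_divide abs_mult abs_minus_commute divide_inverse mult_ac)
        also have "\<dots> \<le> (e * a^2 / 2) / ((\<bar>a\<bar>/2) * \<bar>a\<bar>)"
          using far a close e by (intro frac_le mult_right_mono) (auto simp: zero_less_mult_iff)
        also have "\<dots> = e" using a by (simp add: power2_eq_square field_simps)
        finally show False using gt by simp
      qed
    qed
    moreover have "\<forall>\<^sub>F n in sequentially. measure (M n) {\<omega> \<in> space (M n). \<bar>a\<bar>/2 < \<bar>X n \<omega> - a\<bar>} \<le> d/2"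
      and "\<forall>\<^sub>F n in sequentially. measure (M n) {\<omega> \<in> space (M n). e * a^2 / 2 < \<bar>X n \<omega> - a\<bar>} \<le> d/2"
      by (rule conv_in_prob_zeroD[OF X0]; use a d e in simp)+
    ultimately show "\<forall>\<^sub>F n in sequentially. measure (M n) {\<omega> \<in> space (M n). e < \<bar>inverse (X n \<omega>) - inverse a\<bar>} \<le> d"
      by eventually_elim linarith
  qed
  then show ?thesis using conv_in_prob_iff_zero by blast
qed

lemma conv_in_prob_divide:
  assumes "conv_in_prob X a" "conv_in_prob Y b" "b \<noteq> 0"
  shows "conv_in_prob (\<lambda>n \<omega>. X n \<omega> / Y n \<omega>) (a / b)"
  using conv_in_prob_mult[OF assms(1) conv_in_prob_inverse[OF assms(2,3)]] by (simp add: divide_inverse)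

lemma tendsto_integral_lipschitz_diff:
  fixes f :: "real \<Rightarrow> real"
  assumes ST: "conv_in_prob (\<lambda>n \<omega>. S n \<omega> - T n \<omega>) 0"
    and mS: "\<forall>\<^sub>F n in sequentially. S n \<in> borel_measurable (M n)"
    and mT: "\<forall>\<^sub>F n in sequentially. T n \<in> borel_measurable (M n)"
    and f: "f \<in> borel_measurable borel" and bound: "\<And>z. \<bar>f z\<bar> \<le> 1"
    and L: "L \<ge> 0" and lip: "\<And>a b. \<bar>f a - f b\<bar> \<le> L * \<bar>a - b\<bar>"
  shows "(\<lambda>n. (\<integral>\<omega>. f (S n \<omega>) \<partial>M n) - (\<integral>\<omega>. f (T n \<omega>) \<partial>M n)) \<longlonglongrightarrow> 0"
proof (rule tendstoI)
  fix d :: real assume d: "d > 0"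
  define \<delta> where "\<delta> = d / (4 * (L + 1))"
  have \<delta>: "\<delta> > 0" using d L by (simp add: \<delta>_def)
  have "L * \<delta> = d / 4 * (L / (L + 1))" using L by (simp add: \<delta>_def field_simps)
  also have "\<dots> \<le> d / 4 * 1" using L d by (intro mult_left_mono) auto
  finally have L\<delta>: "L * \<delta> \<le> d / 4" by simp
  have "\<forall>\<^sub>F n in sequentially. measure (M n) {\<omega> \<in> space (M n). \<delta> < \<bar>S n \<omega> - T n \<omega>\<bar>} \<le> d / 8"
    by (rule conv_in_prob_zeroD[OF ST]) (use \<delta> d in simp_all)
  then show "\<forall>\<^sub>F n in sequentially. dist ((\<integral>\<omega>. f (S n \<omega>) \<partial>M n) - (\<integral>\<omega>. f (T n \<omega>) \<partial>M n)) 0 < d"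
    using mS mT eventually_prob_space
  proof eventually_elim
    case (elim n)
    interpret P: prob_space "M n" by (fact elim(4))
    have "\<bar>(\<integral>\<omega>. f (S n \<omega>) \<partial>M n) - (\<integral>\<omega>. f (T n \<omega>) \<partial>M n)\<bar>
            \<le> L * \<delta> + 2 * measure (M n) {\<omega> \<in> space (M n). \<delta> < \<bar>S n \<omega> - T n \<omega>\<bar>}"
      by (rule P.integral_lipschitz_diff_le[OF elim(2,3) f bound L lip]) (use \<delta> in simp)
    with elim(1) L\<delta> d show ?case by (simp add: dist_real_def)
  qed
qed

lemma weak_conv_m_of_conv_in_prob_diff:
  assumes ST: "conv_in_prob (\<lambda>n \<omega>. S n \<omega> - T n \<omega>) 0"
    and mS: "\<forall>\<^sub>F n in sequentially. S n \<in> borel_measurable (M n)"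
    and mT: "\<forall>\<^sub>F n in sequentially. T n \<in> borel_measurable (M n)"
    and L: "real_distribution L"
    and T_lim: "\<And>u v. u < v \<Longrightarrow> (\<lambda>n. \<integral>\<omega>. cts_step u v (T n \<omega>) \<partial>M n) \<longlonglongrightarrow> integral\<^sup>L L (cts_step u v)"
  shows "weak_conv_m (\<lambda>n. distr (M n) borel (S n)) L"
proof -
  obtain N where N: "\<And>n. n \<ge> N \<Longrightarrow> prob_space (M n) \<and> S n \<in> borel_measurable (M n)"
    using eventually_conj[OF eventually_prob_space mS] by (auto simp: eventually_sequentially)
  define \<mu> where "\<mu> n = distr (M (n + N)) borel (S (n + N))" for n
  have \<mu>: "real_distribution (\<mu> n)" for n
    using N[of "n + N"] by (auto simp: \<mu>_def intro: prob_space.real_distribution_distr)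
  have "(\<lambda>n. integral\<^sup>L (\<mu> n) (cts_step u v)) \<longlonglongrightarrow> integral\<^sup>L L (cts_step u v)" if uv: "u < v" for u v
  proof -
    note [measurable] = borel_measurable_cts_step[OF uv]
    have "(\<lambda>n. (\<integral>\<omega>. cts_step u v (S n \<omega>) \<partial>M n) - (\<integral>\<omega>. cts_step u v (T n \<omega>) \<partial>M n)) \<longlonglongrightarrow> 0"
      by (rule tendsto_integral_lipschitz_diff[OF ST mS mT _ abs_cts_step_le_1[OF uv] _ cts_step_lipschitz[OF uv]])
        (use uv in auto)
    from tendsto_add[OF this T_lim[OF uv]]
    have "(\<lambda>n. \<integral>\<omega>. cts_step u v (S n \<omega>) \<partial>M n) \<longlonglongrightarrow> integral\<^sup>L L (cts_step u v)" by simp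
    then have "(\<lambda>n. \<integral>\<omega>. cts_step u v (S (n + N) \<omega>) \<partial>M (n + N)) \<longlonglongrightarrow> integral\<^sup>L L (cts_step u v)"
      by (rule LIMSEQ_ignore_initial_segment)
    moreover have "integral\<^sup>L (\<mu> n) (cts_step u v) = (\<integral>\<omega>. cts_step u v (S (n + N) \<omega>) \<partial>M (n + N))" for n
      using N[of "n + N"] by (simp add: \<mu>_def integral_distr)
    ultimately show ?thesis by simp
  qed
  then have "weak_conv_m \<mu> L" by (rule integral_cts_step_conv_imp_weak_conv[OF \<mu> L])
  then show ?thesis
    unfolding weak_conv_m_def weak_conv_def \<mu>_def by (auto intro: LIMSEQ_offset)
qed

lemma conv_in_prob_square_ratio_diff:
  assumes A: "bdd_in_prob A" and D: "conv_in_prob D 0"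
    and S: "conv_in_prob S s" and s: "r \<longlonglongrightarrow> s" "s \<noteq> 0"
  shows "conv_in_prob (\<lambda>n \<omega>. (A n \<omega> + D n \<omega>)^2 / S n \<omega> - (A n \<omega>)^2 / r n) 0"
proof -
  have inv_diff: "conv_in_prob (\<lambda>n \<omega>. inverse (S n \<omega>) - inverse (r n)) 0"
    using conv_in_prob_diff[OF conv_in_prob_inverse[OF S s(2)] conv_in_prob_const[OF tendsto_inverse[OF s]]]
    by simp
  have cross: "conv_in_prob (\<lambda>n \<omega>. 2 * A n \<omega> * D n \<omega> + D n \<omega> * D n \<omega>) 0"
    using conv_in_prob_add[OF conv_in_prob_zero_mult_bdd[OF
          bdd_in_prob_mult[OF conv_in_prob_imp_bdd_in_prob[OF conv_in_prob_const[OF tendsto_const]] A] D]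
        conv_in_prob_mult[OF D D]]
    by simp
  have "conv_in_prob (\<lambda>n \<omega>. (A n \<omega> * A n \<omega>) * (inverse (S n \<omega>) - inverse (r n))
      + inverse (S n \<omega>) * (2 * A n \<omega> * D n \<omega> + D n \<omega> * D n \<omega>)) (0 + 0)"
    by (intro conv_in_prob_add conv_in_prob_zero_mult_bdd bdd_in_prob_mult A inv_diff cross
        conv_in_prob_imp_bdd_in_prob[OF conv_in_prob_inverse[OF S s(2)]])
  then show ?thesis
    by (simp add: divide_inverse power2_eq_square algebra_simps)
qed

end

section \<open>Consistency of the private statistics\<close>

locale private_regression =
  fixes \<sigma>e \<beta>1 \<beta>2 cx cx2 \<eta> :: real
    and x :: "nat \<Rightarrow> nat \<Rightarrow> real"
    and \<Delta> \<rho> :: "nat \<Rightarrow> real"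
    and M :: "nat \<Rightarrow> 'a measure"
    and Y :: "nat \<Rightarrow> nat \<Rightarrow> 'a \<Rightarrow> real"
    and Z :: "nat \<Rightarrow> nat \<Rightarrow> 'a \<Rightarrow> real"
  assumes sigma_pos: "\<sigma>e > 0"
    and Delta_pos: "\<And>n. \<Delta> n > 0"
    and rho_pos: "\<And>n. \<rho> n > 0"
    and prob: "\<And>n. n > 2 \<Longrightarrow> prob_space (M n)"
    and Y_distr: "\<And>n i. n > 2 \<Longrightarrow> i < n \<Longrightarrow>
        distributed (M n) lborel (Y n i) (\<lambda>t. ennreal (normal_density (\<beta>2 + \<beta>1 * x n i) \<sigma>e t))"
    and Z_distr: "\<And>n k. n > 2 \<Longrightarrow> k < 5 \<Longrightarrow>
        distributed (M n) lborel (Z n k) (\<lambda>t. ennreal (std_normal_density t))"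
    and indep: "\<And>n. n > 2 \<Longrightarrow>
        prob_space.indep_vars (M n) (\<lambda>_. borel) (case_sum (Y n) (Z n)) (Inl ` {..<n} \<union> Inr ` {..<5})"
    and xbar_lim: "(\<lambda>n. (\<Sum>i<n. x n i) / real n) \<longlonglongrightarrow> cx"
    and x2bar_lim: "(\<lambda>n. (\<Sum>i<n. (x n i)^2) / real n) \<longlonglongrightarrow> cx2"
    and c_ineq: "cx2 > cx^2"
    and eta_lim: "(\<lambda>n. (\<Sum>i<n. ((\<beta>2 + \<beta>1 * x n i)
                       - ((\<beta>2 + \<beta>1 * ((\<Sum>j<n. x n j) / real n)) + 0 * x n i))^2) / \<sigma>e^2)
                  \<longlonglongrightarrow> \<eta>^2"
    and Delta_rho1: "(\<lambda>n. (\<Delta> n)^2 / (\<rho> n * real n)) \<longlonglongrightarrow> 0"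
    and Delta_rho2: "(\<lambda>n. (\<Delta> n)^4 / (\<rho> n * real n)) \<longlonglongrightarrow> 0"
    and y_clip: "(\<lambda>n. measure (M n) {\<omega> \<in> space (M n). \<exists>i<n. Y n i \<omega> \<notin> {-\<Delta> n..\<Delta> n}}) \<longlonglongrightarrow> 0"
    and x_in: "\<And>n i. n > 2 \<Longrightarrow> i < n \<Longrightarrow> x n i \<in> {-\<Delta> n..\<Delta> n}"
begin

sublocale prob_space_sequence M
  by unfold_locales (rule eventually_mono[OF eventually_gt_at_top prob])

definition "mean_Y n i = \<beta>2 + \<beta>1 * x n i"
definition "x_mean n = (\<Sum>i<n. x n i) / real n"
definition "x_sq_mean n = (\<Sum>i<n. (x n i)^2) / real n"
definition "y_mean n \<omega> = (\<Sum>i<n. Y n i \<omega>) / real n"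
definition "xy_mean n \<omega> = (\<Sum>i<n. x n i * Y n i \<omega>) / real n"
definition "y_sq_mean n \<omega> = (\<Sum>i<n. (Y n i \<omega>)^2) / real n"

lemma Y_normal: "n > 2 \<Longrightarrow> i < n \<Longrightarrow> distributed (M n) lborel (Y n i) (normal_density (mean_Y n i) \<sigma>e)"
  using Y_distr by (simp add: mean_Y_def)

lemma Y_measurable: "n > 2 \<Longrightarrow> i < n \<Longrightarrow> Y n i \<in> borel_measurable (M n)"
  using Y_distr[of n i] by (auto dest: distributed_measurable)

lemma Z_measurable: "n > 2 \<Longrightarrow> k < 5 \<Longrightarrow> Z n k \<in> borel_measurable (M n)"
  using Z_distr[of n k] by (auto dest: distributed_measurable)

lemma indep_Y: "n > 2 \<Longrightarrow> prob_space.indep_vars (M n) (\<lambda>_. borel) (Y n) {..<n}"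
  using prob_space.indep_vars_case_sum_Inl[OF prob indep] by (simp add: comp_def)

lemma Y_centered_moments:
  assumes "n > 2" "i < n"
  shows "integrable (M n) (\<lambda>\<omega>. (Y n i \<omega> - mean_Y n i)^k)"
    and "(\<integral>\<omega>. Y n i \<omega> - mean_Y n i \<partial>M n) = 0"
    and "(\<integral>\<omega>. (Y n i \<omega> - mean_Y n i)^2 \<partial>M n) = \<sigma>e^2"
    and "(\<integral>\<omega>. (Y n i \<omega> - mean_Y n i)^4 \<partial>M n) = 3 * \<sigma>e^4"
  using prob_space.normal_centered_power(1)[OF prob[OF assms(1)] Y_normal[OF assms] sigma_pos]
    prob_space.normal_centered_moments[OF prob[OF assms(1)] Y_normal[OF assms] sigma_pos]
  by auto

lemma x_mean_lim: "x_mean \<longlonglongrightarrow> cx"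
  using xbar_lim by (simp add: x_mean_def[abs_def])

lemma x_sq_mean_lim: "x_sq_mean \<longlonglongrightarrow> cx2"
  using x2bar_lim by (simp add: x_sq_mean_def[abs_def])

lemma conv_in_prob_noise:
  assumes k: "k < 5" and a: "(\<lambda>n. (a n)^2) \<longlonglongrightarrow> 0"
  shows "conv_in_prob (\<lambda>n \<omega>. a n * Z n k \<omega>) 0"
proof (rule conv_in_prob_zero_second_moment)
  show "\<forall>\<^sub>F n in sequentially. (\<lambda>\<omega>. a n * Z n k \<omega>) \<in> borel_measurable (M n)"
    using eventually_gt_at_top[of 2] by eventually_elim (use Z_measurable k in measurable)
  have moment: "integrable (M n) (\<lambda>\<omega>. (a n * Z n k \<omega>)^2) \<and> (\<integral>\<omega>. (a n * Z n k \<omega>)^2 \<partial>M n) = (a n)^2"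
    if "n > 2" for n
  proof -
    have D: "distributed (M n) lborel (Z n k) (normal_density 0 1)" using Z_distr that k by auto
    show ?thesis
      using prob_space.normal_centered_power(1)[OF prob[OF that] D, of 2]
        prob_space.normal_centered_moments(2)[OF prob[OF that] D]
      by (simp add: power_mult_distrib)
  qed
  show "\<forall>\<^sub>F n in sequentially. integrable (M n) (\<lambda>\<omega>. (a n * Z n k \<omega>)^2)"
    using eventually_gt_at_top[of 2] by eventually_elim (use moment in blast)
  have "\<forall>\<^sub>F n in sequentially. (a n)^2 = (\<integral>\<omega>. (a n * Z n k \<omega>)^2 \<partial>M n)"
    using eventually_gt_at_top[of 2] by eventually_elim (use moment in auto)
  with a show "(\<lambda>n. \<integral>\<omega>. (a n * Z n k \<omega>)^2 \<partial>M n) \<longlonglongrightarrow> 0"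
    by (rule Lim_transform_eventually)
qed

lemma conv_in_prob_linear_form:
  assumes a: "(\<lambda>n. \<Sum>i<n. (a n i)^2) \<longlonglongrightarrow> 0"
  shows "conv_in_prob (\<lambda>n \<omega>. \<Sum>i<n. a n i * (Y n i \<omega> - mean_Y n i)) 0"
proof (rule conv_in_prob_zero_second_moment)
  show "\<forall>\<^sub>F n in sequentially. (\<lambda>\<omega>. \<Sum>i<n. a n i * (Y n i \<omega> - mean_Y n i)) \<in> borel_measurable (M n)"
    using eventually_gt_at_top[of 2] by eventually_elim (use Y_measurable in auto)
  have moment: "integrable (M n) (\<lambda>\<omega>. (\<Sum>i<n. a n i * (Y n i \<omega> - mean_Y n i))^2) \<and>
     (\<integral>\<omega>. (\<Sum>i<n. a n i * (Y n i \<omega> - mean_Y n i))^2 \<partial>M n) = \<sigma>e^2 * (\<Sum>i<n. (a n i)^2)"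
    if n: "n > 2" for n
  proof -
    interpret P: prob_space "M n" using prob n by auto
    have "P.indep_vars (\<lambda>_. borel) (\<lambda>i \<omega>. a n i * (Y n i \<omega> - mean_Y n i)) {..<n}"
      by (rule P.indep_vars_compose2[OF indep_Y[OF n]]) auto
    moreover have "integrable (M n) (\<lambda>\<omega>. (a n i * (Y n i \<omega> - mean_Y n i))^2)"
      and "P.expectation (\<lambda>\<omega>. a n i * (Y n i \<omega> - mean_Y n i)) = 0"
      and "P.expectation (\<lambda>\<omega>. (a n i * (Y n i \<omega> - mean_Y n i))^2) = (a n i)^2 * \<sigma>e^2"
      if "i \<in> {..<n}" for i
      using Y_centered_moments(1)[OF n, of i 2] Y_centered_moments(2,3)[OF n, of i] that
      by (simp_all add: power_mult_distrib)
    ultimately show ?thesis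
      using P.indep_zero_mean_square_sum[of "{..<n}"] by (simp add: sum_distrib_left mult.commute)
  qed
  show "\<forall>\<^sub>F n in sequentially. integrable (M n) (\<lambda>\<omega>. (\<Sum>i<n. a n i * (Y n i \<omega> - mean_Y n i))^2)"
    using eventually_gt_at_top[of 2] by eventually_elim (use moment in blast)
  have "\<forall>\<^sub>F n in sequentially. \<sigma>e^2 * (\<Sum>i<n. (a n i)^2) = (\<integral>\<omega>. (\<Sum>i<n. a n i * (Y n i \<omega> - mean_Y n i))^2 \<partial>M n)"
    using eventually_gt_at_top[of 2] by eventually_elim (use moment in auto)
  with tendsto_mult_right_zero[OF a]
  show "(\<lambda>n. \<integral>\<omega>. (\<Sum>i<n. a n i * (Y n i \<omega> - mean_Y n i))^2 \<partial>M n) \<longlonglongrightarrow> 0"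
    by (rule Lim_transform_eventually)
qed

lemma conv_in_prob_centered_squares:
  "conv_in_prob (\<lambda>n \<omega>. \<Sum>i<n. ((Y n i \<omega> - mean_Y n i)^2 - \<sigma>e^2) / real n) 0"
proof (rule conv_in_prob_zero_second_moment)
  show "\<forall>\<^sub>F n in sequentially.
      (\<lambda>\<omega>. \<Sum>i<n. ((Y n i \<omega> - mean_Y n i)^2 - \<sigma>e^2) / real n) \<in> borel_measurable (M n)"
    using eventually_gt_at_top[of 2] by eventually_elim (use Y_measurable in auto)
  have moment: "integrable (M n) (\<lambda>\<omega>. (\<Sum>i<n. ((Y n i \<omega> - mean_Y n i)^2 - \<sigma>e^2) / real n)^2) \<and>
     (\<integral>\<omega>. (\<Sum>i<n. ((Y n i \<omega> - mean_Y n i)^2 - \<sigma>e^2) / real n)^2 \<partial>M n) = 2 * \<sigma>e^4 / real n"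
    if n: "n > 2" for n
  proof -
    interpret P: prob_space "M n" using prob n by auto
    have expand: "(((Y n i \<omega> - mean_Y n i)^2 - \<sigma>e^2) / real n)^2 =
       ((Y n i \<omega> - mean_Y n i)^4 - 2 * \<sigma>e^2 * (Y n i \<omega> - mean_Y n i)^2 + \<sigma>e^4) / (real n)^2" for i \<omega>
      by (simp add: power_divide) (simp add: power2_eq_square power4_eq_xxxx algebra_simps)
    have "P.indep_vars (\<lambda>_. borel) (\<lambda>i \<omega>. ((Y n i \<omega> - mean_Y n i)^2 - \<sigma>e^2) / real n) {..<n}"
      by (rule P.indep_vars_compose2[OF indep_Y[OF n]]) auto
    moreover have "integrable (M n) (\<lambda>\<omega>. (((Y n i \<omega> - mean_Y n i)^2 - \<sigma>e^2) / real n)^2)"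
      and "P.expectation (\<lambda>\<omega>. ((Y n i \<omega> - mean_Y n i)^2 - \<sigma>e^2) / real n) = 0"
      and "P.expectation (\<lambda>\<omega>. (((Y n i \<omega> - mean_Y n i)^2 - \<sigma>e^2) / real n)^2) = 2 * \<sigma>e^4 / (real n)^2"
      if "i \<in> {..<n}" for i
      unfolding expand
      using Y_centered_moments(1)[OF n, of i 2] Y_centered_moments(1)[OF n, of i 4]
        Y_centered_moments(3,4)[OF n, of i] that
      by (simp_all add: Bochner_Integration.integral_diff Bochner_Integration.integral_add P.prob_space
          power2_eq_square power4_eq_xxxx)
    ultimately show ?thesis
      using P.indep_zero_mean_square_sum[of "{..<n}"] n by (simp add: power2_eq_square)
  qed
  show "\<forall>\<^sub>F n in sequentially. integrable (M n) (\<lambda>\<omega>. (\<Sum>i<n. ((Y n i \<omega> - mean_Y n i)^2 - \<sigma>e^2) / real n)^2)"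
    using eventually_gt_at_top[of 2] by eventually_elim (use moment in blast)
  have "\<forall>\<^sub>F n in sequentially.
      2 * \<sigma>e^4 / real n = (\<integral>\<omega>. (\<Sum>i<n. ((Y n i \<omega> - mean_Y n i)^2 - \<sigma>e^2) / real n)^2 \<partial>M n)"
    using eventually_gt_at_top[of 2] by eventually_elim (use moment in auto)
  moreover have "(\<lambda>n. 2 * \<sigma>e^4 / real n) \<longlonglongrightarrow> 0" by real_asymp
  ultimately show "(\<lambda>n. \<integral>\<omega>. (\<Sum>i<n. ((Y n i \<omega> - mean_Y n i)^2 - \<sigma>e^2) / real n)^2 \<partial>M n) \<longlonglongrightarrow> 0"
    by (rule Lim_transform_eventually[rotated])
qed

definition "Xbar n \<omega> = xbar_t (\<Delta> n) (\<rho> n) n (x n) (\<lambda>i. Y n i \<omega>) (\<lambda>k. Z n k \<omega>)"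
definition "Ybar n \<omega> = ybar_t (\<Delta> n) (\<rho> n) n (x n) (\<lambda>i. Y n i \<omega>) (\<lambda>k. Z n k \<omega>)"
definition "X2bar n \<omega> = x2bar_t (\<Delta> n) (\<rho> n) n (x n) (\<lambda>i. Y n i \<omega>) (\<lambda>k. Z n k \<omega>)"
definition "XYbar n \<omega> = xybar_t (\<Delta> n) (\<rho> n) n (x n) (\<lambda>i. Y n i \<omega>) (\<lambda>k. Z n k \<omega>)"
definition "Y2bar n \<omega> = y2bar_t (\<Delta> n) (\<rho> n) n (x n) (\<lambda>i. Y n i \<omega>) (\<lambda>k. Z n k \<omega>)"

definition "sd_mean n = sqrt (2 * (\<Delta> n)^2 / ((\<rho> n / 5) * (real n)^2))"
definition "sd_sq n = sqrt ((\<Delta> n)^4 / (2 * (\<rho> n / 5) * (real n)^2))"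
definition "sd_xy n = sqrt (2 * (\<Delta> n)^4 / ((\<rho> n / 5) * (real n)^2))"

lemma real_mult_sd_lim:
  shows "(\<lambda>n. real n * (sd_mean n)^2) \<longlonglongrightarrow> 0"
    and "(\<lambda>n. real n * (sd_sq n)^2) \<longlonglongrightarrow> 0"
    and "(\<lambda>n. real n * (sd_xy n)^2) \<longlonglongrightarrow> 0"
proof -
  have pos: "\<rho> n > 0" "\<Delta> n > 0" for n using rho_pos Delta_pos by auto
  have "\<forall>\<^sub>F n in sequentially. 10 * ((\<Delta> n)^2 / (\<rho> n * real n)) = real n * (sd_mean n)^2"
    using eventually_gt_at_top[of 2] by eventually_elim
      (use pos in \<open>simp add: sd_mean_def power2_eq_square field_simps abs_mult abs_of_pos\<close>)
  with tendsto_mult_right_zero[OF Delta_rho1]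
  show "(\<lambda>n. real n * (sd_mean n)^2) \<longlonglongrightarrow> 0" by (rule Lim_transform_eventually)
  have "\<forall>\<^sub>F n in sequentially. 5/2 * ((\<Delta> n)^4 / (\<rho> n * real n)) = real n * (sd_sq n)^2"
    using eventually_gt_at_top[of 2] by eventually_elim
      (use pos in \<open>simp add: sd_sq_def power2_eq_square field_simps abs_mult abs_of_pos\<close>)
  with tendsto_mult_right_zero[OF Delta_rho2]
  show "(\<lambda>n. real n * (sd_sq n)^2) \<longlonglongrightarrow> 0" by (rule Lim_transform_eventually)
  have "\<forall>\<^sub>F n in sequentially. 10 * ((\<Delta> n)^4 / (\<rho> n * real n)) = real n * (sd_xy n)^2"
    using eventually_gt_at_top[of 2] by eventually_elim
      (use pos in \<open>simp add: sd_xy_def power2_eq_square field_simps abs_mult abs_of_pos\<close>)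
  with tendsto_mult_right_zero[OF Delta_rho2]
  show "(\<lambda>n. real n * (sd_xy n)^2) \<longlonglongrightarrow> 0" by (rule Lim_transform_eventually)
qed

lemmas sd_lim = real_mult_sd_lim[THEN tendsto_power2_zero_of_real_mult]

lemma sqrt_n_sd_lim:
  shows "(\<lambda>n. (sqrt (real n) * sd_mean n)^2) \<longlonglongrightarrow> 0"
    and "(\<lambda>n. (sqrt (real n) * sd_xy n)^2) \<longlonglongrightarrow> 0"
  using real_mult_sd_lim by (simp_all add: power_mult_distrib)

definition "clipped n \<omega> \<longleftrightarrow> (\<exists>i<n. Y n i \<omega> \<notin> {-\<Delta> n..\<Delta> n})"

definition "clip_err_y n \<omega> = (\<Sum>i<n. clip (-\<Delta> n) (\<Delta> n) (Y n i \<omega>) - Y n i \<omega>) / real n"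
definition "clip_err_xy n \<omega> =
  (\<Sum>i<n. clip (-((\<Delta> n)^2)) ((\<Delta> n)^2) (x n i * Y n i \<omega>) - x n i * Y n i \<omega>) / real n"
definition "clip_err_y_sq n \<omega> = (\<Sum>i<n. clip 0 ((\<Delta> n)^2) ((Y n i \<omega>)^2) - (Y n i \<omega>)^2) / real n"

lemma conv_in_prob_zero_unless_clipped:
  assumes meas: "\<And>n. n > 2 \<Longrightarrow> D n \<in> borel_measurable (M n)"
    and zero: "\<And>n \<omega>. n > 2 \<Longrightarrow> \<omega> \<in> space (M n) \<Longrightarrow> \<not> clipped n \<omega> \<Longrightarrow> D n \<omega> = 0"
  shows "conv_in_prob D 0"
proof (rule conv_in_prob_zero_outside[where Q=clipped])
  show "\<forall>\<^sub>F n in sequentially. D n \<in> borel_measurable (M n)"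
    using eventually_gt_at_top[of 2] by eventually_elim (rule meas)
  show "\<forall>\<^sub>F n in sequentially. {\<omega> \<in> space (M n). clipped n \<omega>} \<in> sets (M n)"
    using eventually_gt_at_top[of 2]
  proof eventually_elim
    case (elim n)
    have "{\<omega> \<in> space (M n). clipped n \<omega>} = (\<Union>i<n. {\<omega> \<in> space (M n). Y n i \<omega> \<notin> {-\<Delta> n..\<Delta> n}})"
      by (auto simp: clipped_def)
    also have "\<dots> \<in> sets (M n)"
      using Y_measurable[OF elim] by (intro sets.finite_UN) auto
    finally show ?case .
  qed
  show "\<forall>\<^sub>F n in sequentially. \<forall>\<omega>\<in>space (M n). D n \<omega> \<noteq> 0 \<longrightarrow> clipped n \<omega>"
    using eventually_gt_at_top[of 2] by eventually_elim (use zero in blast)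
  show "(\<lambda>n. measure (M n) {\<omega> \<in> space (M n). clipped n \<omega>}) \<longlonglongrightarrow> 0"
    using y_clip by (simp add: clipped_def)
qed

lemma clip_err_eq_0:
  assumes n: "n > 2" and "\<not> clipped n \<omega>"
  shows "clip_err_y n \<omega> = 0" and "clip_err_xy n \<omega> = 0" and "clip_err_y_sq n \<omega> = 0"
proof -
  have Y: "\<bar>Y n i \<omega>\<bar> \<le> \<Delta> n" if "i < n" for i
    using assms(2) that by (auto simp: clipped_def)
  have XY: "\<bar>x n i * Y n i \<omega>\<bar> \<le> (\<Delta> n)^2" if "i < n" for i
  proof -
    have "\<bar>x n i\<bar> \<le> \<Delta> n" using x_in[OF n that] by auto
    then have "\<bar>x n i\<bar> * \<bar>Y n i \<omega>\<bar> \<le> \<Delta> n * \<Delta> n" using Y[OF that] by (intro mult_mono) auto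
    then show ?thesis by (simp add: abs_mult power2_eq_square)
  qed
  have "clip (-((\<Delta> n)^2)) ((\<Delta> n)^2) (x n i * Y n i \<omega>) = x n i * Y n i \<omega>" if "i < n" for i
    using XY[OF that] by (intro clip_eq_self) (auto simp: abs_le_iff)
  then show "clip_err_xy n \<omega> = 0" by (simp add: clip_err_xy_def)
  have "clip (-\<Delta> n) (\<Delta> n) (Y n i \<omega>) = Y n i \<omega>" if "i < n" for i
    using Y[OF that] by (intro clip_eq_self) auto
  then show "clip_err_y n \<omega> = 0" by (simp add: clip_err_y_def)
  have "(Y n i \<omega>)^2 \<le> (\<Delta> n)^2" if "i < n" for i
    using Y[OF that] Delta_pos[of n] by (subst abs_le_square_iff[symmetric]) auto
  then have "clip 0 ((\<Delta> n)^2) ((Y n i \<omega>)^2) = (Y n i \<omega>)^2" if "i < n" for i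
    using that by (intro clip_eq_self) auto
  then show "clip_err_y_sq n \<omega> = 0" by (simp add: clip_err_y_sq_def)
qed

lemma conv_in_prob_clip_err:
  shows "conv_in_prob (\<lambda>n \<omega>. c n * clip_err_y n \<omega>) 0"
    and "conv_in_prob (\<lambda>n \<omega>. c n * clip_err_xy n \<omega>) 0"
    and "conv_in_prob (\<lambda>n \<omega>. c n * clip_err_y_sq n \<omega>) 0"
  by (intro conv_in_prob_zero_unless_clipped;
      use Y_measurable clip_err_eq_0 in \<open>simp add: clip_err_y_def clip_err_xy_def clip_err_y_sq_def\<close>)+

lemmas conv_in_prob_clip_err_unscaled = conv_in_prob_clip_err[where c="\<lambda>_. 1", simplified]

lemma sum_clip_x: "n > 2 \<Longrightarrow> (\<Sum>i<n. clip (-\<Delta> n) (\<Delta> n) (x n i)) = (\<Sum>i<n. x n i)"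
  using x_in by (intro sum.cong refl clip_eq_self) auto

lemma sum_clip_x_sq: "n > 2 \<Longrightarrow> (\<Sum>i<n. clip 0 ((\<Delta> n)^2) ((x n i)^2)) = (\<Sum>i<n. (x n i)^2)"
proof (intro sum.cong refl clip_eq_self)
  fix i assume "n > 2" "i \<in> {..<n}"
  then show "(x n i)^2 \<le> (\<Delta> n)^2"
    using x_in[of n i] Delta_pos[of n] by (subst abs_le_square_iff[symmetric]) auto
qed simp

lemma Xbar_eq: "n > 2 \<Longrightarrow> Xbar n \<omega> = x_mean n + sd_mean n * Z n 0 \<omega>"
  by (simp add: Xbar_def xbar_t_def sum_clip_x sd_mean_def x_mean_def)

lemma X2bar_eq: "n > 2 \<Longrightarrow> X2bar n \<omega> = x_sq_mean n + sd_sq n * Z n 2 \<omega>"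
  by (simp add: X2bar_def x2bar_t_def sum_clip_x_sq sd_sq_def x_sq_mean_def)

lemma Ybar_eq: "Ybar n \<omega> = y_mean n \<omega> + sd_mean n * Z n 1 \<omega> + clip_err_y n \<omega>"
  by (simp add: Ybar_def ybar_t_def y_mean_def clip_err_y_def sd_mean_def sum_subtractf diff_divide_distrib)

lemma XYbar_eq: "XYbar n \<omega> = xy_mean n \<omega> + sd_xy n * Z n 3 \<omega> + clip_err_xy n \<omega>"
  by (simp add: XYbar_def xybar_t_def xy_mean_def clip_err_xy_def sd_xy_def sum_subtractf diff_divide_distrib)

lemma Y2bar_eq: "Y2bar n \<omega> = y_sq_mean n \<omega> + sd_sq n * Z n 4 \<omega> + clip_err_y_sq n \<omega>"
  by (simp add: Y2bar_def y2bar_t_def y_sq_mean_def clip_err_y_sq_def sd_sq_def sum_subtractf diff_divide_distrib)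

lemma sum_mean_Y: "n > 0 \<Longrightarrow> (\<Sum>i<n. mean_Y n i) / real n = \<beta>2 + \<beta>1 * x_mean n"
  by (simp add: mean_Y_def x_mean_def sum.distrib sum_distrib_left[symmetric] field_simps)

lemma sum_mean_Y_sq:
  "n > 0 \<Longrightarrow> (\<Sum>i<n. (mean_Y n i)^2) / real n = \<beta>2^2 + 2 * \<beta>2 * \<beta>1 * x_mean n + \<beta>1^2 * x_sq_mean n"
proof -
  assume n: "n > 0"
  have "(\<Sum>i<n. (mean_Y n i)^2) = (\<Sum>i<n. \<beta>2^2 + (2 * \<beta>2 * \<beta>1) * x n i + \<beta>1^2 * (x n i)^2)"
    by (intro sum.cong) (auto simp: mean_Y_def power2_eq_square algebra_simps)
  also have "\<dots> = real n * \<beta>2^2 + (2 * \<beta>2 * \<beta>1) * (\<Sum>i<n. x n i) + \<beta>1^2 * (\<Sum>i<n. (x n i)^2)"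
    by (simp add: sum.distrib sum_distrib_left)
  finally show ?thesis using n by (simp add: x_mean_def x_sq_mean_def field_simps)
qed

lemma y_mean_eq:
  "n > 0 \<Longrightarrow> y_mean n \<omega> = (\<beta>2 + \<beta>1 * x_mean n) + (\<Sum>i<n. (1 / real n) * (Y n i \<omega> - mean_Y n i))"
  by (simp add: y_mean_def sum_mean_Y[symmetric] sum_divide_distrib sum_subtractf diff_divide_distrib)

lemma xy_mean_eq:
  "xy_mean n \<omega> = (\<beta>2 * x_mean n + \<beta>1 * x_sq_mean n) + (\<Sum>i<n. (x n i / real n) * (Y n i \<omega> - mean_Y n i))"
proof -
  have "(\<Sum>i<n. x n i * mean_Y n i) / real n = \<beta>2 * x_mean n + \<beta>1 * x_sq_mean n"
    by (simp add: mean_Y_def x_mean_def x_sq_mean_def algebra_simps sum.distrib sum_distrib_left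
        power2_eq_square add_divide_distrib)
  then show ?thesis
    by (simp add: xy_mean_def sum_divide_distrib[symmetric] sum_subtractf diff_divide_distrib algebra_simps)
qed

lemma y_sq_mean_eq:
  assumes "n > 0"
  shows "y_sq_mean n \<omega> = (\<beta>2^2 + 2 * \<beta>2 * \<beta>1 * x_mean n + \<beta>1^2 * x_sq_mean n + \<sigma>e^2)
     + (\<Sum>i<n. (2 * mean_Y n i / real n) * (Y n i \<omega> - mean_Y n i))
     + (\<Sum>i<n. ((Y n i \<omega> - mean_Y n i)^2 - \<sigma>e^2) / real n)"
proof -
  have "y_sq_mean n \<omega> = (\<Sum>i<n. (mean_Y n i)^2 / real n
      + (2 * mean_Y n i / real n) * (Y n i \<omega> - mean_Y n i)
      + ((Y n i \<omega> - mean_Y n i)^2 - \<sigma>e^2) / real n + \<sigma>e^2 / real n)"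
    unfolding y_sq_mean_def sum_divide_distrib
    by (intro sum.cong) (auto simp: power2_eq_square field_simps)
  also have "\<dots> = (\<Sum>i<n. (mean_Y n i)^2) / real n
      + (\<Sum>i<n. (2 * mean_Y n i / real n) * (Y n i \<omega> - mean_Y n i))
      + (\<Sum>i<n. ((Y n i \<omega> - mean_Y n i)^2 - \<sigma>e^2) / real n) + \<sigma>e^2"
    using assms by (simp add: sum.distrib sum_divide_distrib)
  finally show ?thesis using sum_mean_Y_sq[OF assms] by simp
qed

lemma conv_in_prob_y_mean: "conv_in_prob y_mean (\<beta>2 + \<beta>1 * cx)"
proof -
  have "(\<lambda>n. \<Sum>i<n. (1 / real n)^2) \<longlonglongrightarrow> 0"
    by simp real_asymp
  then have "conv_in_prob (\<lambda>n \<omega>. (\<beta>2 + \<beta>1 * x_mean n) + (\<Sum>i<n. (1 / real n) * (Y n i \<omega> - mean_Y n i)))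
      ((\<beta>2 + \<beta>1 * cx) + 0)"
    by (intro conv_in_prob_add conv_in_prob_const conv_in_prob_linear_form tendsto_intros x_mean_lim)
  then show ?thesis
    by (rule conv_in_prob_cong[OF _ eventually_mono[OF eventually_gt_at_top[of 2]]]) (simp_all add: y_mean_eq)
qed

lemma conv_in_prob_xy_mean: "conv_in_prob xy_mean (\<beta>2 * cx + \<beta>1 * cx2)"
proof -
  have "(\<lambda>n. \<Sum>i<n. (x n i / real n)^2) = (\<lambda>n. x_sq_mean n * (1 / real n))"
    by (auto simp: x_sq_mean_def power_divide sum_divide_distrib[symmetric] power2_eq_square)
  also have "\<dots> \<longlonglongrightarrow> cx2 * 0"
    by (intro tendsto_intros x_sq_mean_lim)
  finally have "conv_in_prob (\<lambda>n \<omega>. (\<beta>2 * x_mean n + \<beta>1 * x_sq_mean n)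
      + (\<Sum>i<n. (x n i / real n) * (Y n i \<omega> - mean_Y n i))) ((\<beta>2 * cx + \<beta>1 * cx2) + 0)"
    by (intro conv_in_prob_add conv_in_prob_const conv_in_prob_linear_form tendsto_intros
        x_mean_lim x_sq_mean_lim) simp
  then show ?thesis
    by (rule conv_in_prob_cong[OF _ always_eventually]) (simp_all add: xy_mean_eq)
qed

lemma conv_in_prob_y_sq_mean: "conv_in_prob y_sq_mean (\<beta>2^2 + 2 * \<beta>2 * \<beta>1 * cx + \<beta>1^2 * cx2 + \<sigma>e^2)"
proof -
  define m2 where "m2 n = \<beta>2^2 + 2 * \<beta>2 * \<beta>1 * x_mean n + \<beta>1^2 * x_sq_mean n" for n
  have "\<forall>\<^sub>F n in sequentially. 4 * m2 n * (1 / real n) = (\<Sum>i<n. (2 * mean_Y n i / real n)^2)"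
    using eventually_gt_at_top[of 2]
  proof eventually_elim
    case (elim n)
    have "(\<Sum>i<n. (2 * mean_Y n i / real n)^2) = 4 * ((\<Sum>i<n. (mean_Y n i)^2) / real n) * (1 / real n)"
      by (simp add: power_divide sum_divide_distrib[symmetric] sum_distrib_left[symmetric]
          power_mult_distrib power2_eq_square)
    then show ?case using sum_mean_Y_sq[of n] elim by (simp add: m2_def)
  qed
  moreover have "(\<lambda>n. 4 * m2 n * (1 / real n)) \<longlonglongrightarrow> 4 * (\<beta>2^2 + 2 * \<beta>2 * \<beta>1 * cx + \<beta>1^2 * cx2) * 0"
    unfolding m2_def by (intro tendsto_intros x_mean_lim x_sq_mean_lim)
  ultimately have "(\<lambda>n. \<Sum>i<n. (2 * mean_Y n i / real n)^2) \<longlonglongrightarrow> 0"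
    by (simp add: Lim_transform_eventually)
  then have "conv_in_prob (\<lambda>n \<omega>. (m2 n + \<sigma>e^2)
      + (\<Sum>i<n. (2 * mean_Y n i / real n) * (Y n i \<omega> - mean_Y n i))
      + (\<Sum>i<n. ((Y n i \<omega> - mean_Y n i)^2 - \<sigma>e^2) / real n))
      ((\<beta>2^2 + 2 * \<beta>2 * \<beta>1 * cx + \<beta>1^2 * cx2 + \<sigma>e^2) + 0 + 0)"
    unfolding m2_def
    by (intro conv_in_prob_add conv_in_prob_const conv_in_prob_linear_form conv_in_prob_centered_squares
        tendsto_intros x_mean_lim x_sq_mean_lim)
  then show ?thesis
    by (rule conv_in_prob_cong[OF _ eventually_mono[OF eventually_gt_at_top[of 2]]]) (simp_all add: y_sq_mean_eq m2_def)
qed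

lemma conv_in_prob_Xbar: "conv_in_prob Xbar cx"
proof -
  have "conv_in_prob (\<lambda>n \<omega>. x_mean n + sd_mean n * Z n 0 \<omega>) (cx + 0)"
    by (intro conv_in_prob_add conv_in_prob_const x_mean_lim conv_in_prob_noise sd_lim) simp
  then show ?thesis
    by (rule conv_in_prob_cong[OF _ eventually_mono[OF eventually_gt_at_top[of 2]]]) (simp_all add: Xbar_eq)
qed

lemma conv_in_prob_X2bar: "conv_in_prob X2bar cx2"
proof -
  have "conv_in_prob (\<lambda>n \<omega>. x_sq_mean n + sd_sq n * Z n 2 \<omega>) (cx2 + 0)"
    by (intro conv_in_prob_add conv_in_prob_const x_sq_mean_lim conv_in_prob_noise sd_lim) simp
  then show ?thesis
    by (rule conv_in_prob_cong[OF _ eventually_mono[OF eventually_gt_at_top[of 2]]]) (simp_all add: X2bar_eq)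
qed

lemma conv_in_prob_Ybar: "conv_in_prob Ybar (\<beta>2 + \<beta>1 * cx)"
proof -
  have "conv_in_prob (\<lambda>n \<omega>. y_mean n \<omega> + sd_mean n * Z n 1 \<omega> + clip_err_y n \<omega>) ((\<beta>2 + \<beta>1 * cx) + 0 + 0)"
    by (intro conv_in_prob_add conv_in_prob_y_mean conv_in_prob_noise sd_lim conv_in_prob_clip_err_unscaled)
      simp
  then show ?thesis
    by (rule conv_in_prob_cong[OF _ always_eventually]) (simp_all add: Ybar_eq)
qed

lemma conv_in_prob_XYbar: "conv_in_prob XYbar (\<beta>2 * cx + \<beta>1 * cx2)"
proof -
  have "conv_in_prob (\<lambda>n \<omega>. xy_mean n \<omega> + sd_xy n * Z n 3 \<omega> + clip_err_xy n \<omega>)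
      ((\<beta>2 * cx + \<beta>1 * cx2) + 0 + 0)"
    by (intro conv_in_prob_add conv_in_prob_xy_mean conv_in_prob_noise sd_lim conv_in_prob_clip_err_unscaled)
      simp
  then show ?thesis
    by (rule conv_in_prob_cong[OF _ always_eventually]) (simp_all add: XYbar_eq)
qed

lemma conv_in_prob_Y2bar: "conv_in_prob Y2bar (\<beta>2^2 + 2 * \<beta>2 * \<beta>1 * cx + \<beta>1^2 * cx2 + \<sigma>e^2)"
proof -
  have "conv_in_prob (\<lambda>n \<omega>. y_sq_mean n \<omega> + sd_sq n * Z n 4 \<omega> + clip_err_y_sq n \<omega>)
      ((\<beta>2^2 + 2 * \<beta>2 * \<beta>1 * cx + \<beta>1^2 * cx2 + \<sigma>e^2) + 0 + 0)"
    by (intro conv_in_prob_add conv_in_prob_y_sq_mean conv_in_prob_noise sd_lim conv_in_prob_clip_err_unscaled)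
      simp
  then show ?thesis
    by (rule conv_in_prob_cong[OF _ always_eventually]) (simp_all add: Y2bar_eq)
qed

definition "Beta1 n \<omega> = beta1_t (\<Delta> n) (\<rho> n) n (x n) (\<lambda>i. Y n i \<omega>) (\<lambda>k. Z n k \<omega>)"
definition "Beta2 n \<omega> = beta2_t (\<Delta> n) (\<rho> n) n (x n) (\<lambda>i. Y n i \<omega>) (\<lambda>k. Z n k \<omega>)"
definition "Resid n \<omega> = resid_t (\<Delta> n) (\<rho> n) n (x n) (\<lambda>i. Y n i \<omega>) (\<lambda>k. Z n k \<omega>)"

lemma Beta1_eq: "Beta1 n \<omega> = (XYbar n \<omega> - Xbar n \<omega> * Ybar n \<omega>) / (X2bar n \<omega> - Xbar n \<omega> * Xbar n \<omega>)"
  by (simp add: Beta1_def beta1_t_def XYbar_def Xbar_def Ybar_def X2bar_def power2_eq_square)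

lemma Beta2_eq:
  "Beta2 n \<omega> = (Ybar n \<omega> * X2bar n \<omega> - Xbar n \<omega> * XYbar n \<omega>) / (X2bar n \<omega> - Xbar n \<omega> * Xbar n \<omega>)"
  by (simp add: Beta2_def beta2_t_def XYbar_def Xbar_def Ybar_def X2bar_def power2_eq_square)

lemma Resid_eq: "Resid n \<omega> = Beta2 n \<omega> * Beta2 n \<omega> * 1 + 2 * Beta2 n \<omega> * Beta1 n \<omega> * Xbar n \<omega>
    + Beta1 n \<omega> * Beta1 n \<omega> * X2bar n \<omega> - 2 * (Beta2 n \<omega> * Ybar n \<omega> + Beta1 n \<omega> * XYbar n \<omega>) + Y2bar n \<omega>"
  by (simp add: Resid_def resid_t_def qform2_def Beta1_def Beta2_def XYbar_def Xbar_def Ybar_def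
      X2bar_def Y2bar_def)

lemma limit_x_var_pos: "cx2 - cx * cx > 0"
  using c_ineq by (simp add: power2_eq_square)

lemma conv_in_prob_Beta1: "conv_in_prob Beta1 \<beta>1"
proof -
  have "conv_in_prob (\<lambda>n \<omega>. (XYbar n \<omega> - Xbar n \<omega> * Ybar n \<omega>) / (X2bar n \<omega> - Xbar n \<omega> * Xbar n \<omega>))
     ((\<beta>2 * cx + \<beta>1 * cx2 - cx * (\<beta>2 + \<beta>1 * cx)) / (cx2 - cx * cx))"
    using limit_x_var_pos
    by (intro conv_in_prob_divide conv_in_prob_diff conv_in_prob_mult conv_in_prob_XYbar conv_in_prob_Xbar
        conv_in_prob_Ybar conv_in_prob_X2bar) simp
  then show ?thesis
    by (rule conv_in_prob_cong[OF _ always_eventually]) (use limit_x_var_pos in \<open>simp_all add: Beta1_eq field_simps\<close>)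
qed

lemma conv_in_prob_Beta2: "conv_in_prob Beta2 \<beta>2"
proof -
  have "conv_in_prob (\<lambda>n \<omega>. (Ybar n \<omega> * X2bar n \<omega> - Xbar n \<omega> * XYbar n \<omega>) / (X2bar n \<omega> - Xbar n \<omega> * Xbar n \<omega>))
     (((\<beta>2 + \<beta>1 * cx) * cx2 - cx * (\<beta>2 * cx + \<beta>1 * cx2)) / (cx2 - cx * cx))"
    using limit_x_var_pos
    by (intro conv_in_prob_divide conv_in_prob_diff conv_in_prob_mult conv_in_prob_XYbar conv_in_prob_Xbar
        conv_in_prob_Ybar conv_in_prob_X2bar) simp
  then show ?thesis
    by (rule conv_in_prob_cong[OF _ always_eventually]) (use limit_x_var_pos in \<open>simp_all add: Beta2_eq field_simps\<close>)
qed

lemma conv_in_prob_Resid: "conv_in_prob Resid (\<sigma>e^2)"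
proof -
  have const: "conv_in_prob (\<lambda>n \<omega>. c) c" for c by (rule conv_in_prob_const[OF tendsto_const])
  have "conv_in_prob (\<lambda>n \<omega>. Beta2 n \<omega> * Beta2 n \<omega> * 1 + 2 * Beta2 n \<omega> * Beta1 n \<omega> * Xbar n \<omega>
      + Beta1 n \<omega> * Beta1 n \<omega> * X2bar n \<omega> - 2 * (Beta2 n \<omega> * Ybar n \<omega> + Beta1 n \<omega> * XYbar n \<omega>) + Y2bar n \<omega>)
    (\<beta>2 * \<beta>2 * 1 + 2 * \<beta>2 * \<beta>1 * cx + \<beta>1 * \<beta>1 * cx2
      - 2 * (\<beta>2 * (\<beta>2 + \<beta>1 * cx) + \<beta>1 * (\<beta>2 * cx + \<beta>1 * cx2))
      + (\<beta>2^2 + 2 * \<beta>2 * \<beta>1 * cx + \<beta>1^2 * cx2 + \<sigma>e^2))"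
    by (intro conv_in_prob_add conv_in_prob_diff conv_in_prob_mult const conv_in_prob_Beta1 conv_in_prob_Beta2
        conv_in_prob_Xbar conv_in_prob_X2bar conv_in_prob_Ybar conv_in_prob_XYbar conv_in_prob_Y2bar)
  then show ?thesis
    by (rule conv_in_prob_cong[OF _ always_eventually])
      (simp_all add: Resid_eq power2_eq_square algebra_simps)
qed

lemma conv_in_prob_scaled_Resid: "conv_in_prob (\<lambda>n \<omega>. real n * Resid n \<omega> / (real n - 2)) (\<sigma>e^2)"
proof -
  have "(\<lambda>n. real n / (real n - 2)) \<longlonglongrightarrow> 1" by real_asymp
  from conv_in_prob_mult[OF conv_in_prob_const[OF this] conv_in_prob_Resid]
  show ?thesis by (rule conv_in_prob_cong[OF _ always_eventually]) simp_all
qed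

section \<open>The private F statistic\<close>

definition "Sxx n = (\<Sum>i<n. (x n i - x_mean n)^2)"

lemma Sxx_nonneg: "Sxx n \<ge> 0"
  by (simp add: Sxx_def sum_nonneg)

lemma Sxx_eq: "n > 0 \<Longrightarrow> Sxx n = real n * (x_sq_mean n - (x_mean n)^2)"
proof -
  assume n: "n > 0"
  have "Sxx n = (\<Sum>i<n. (x n i)^2) - 2 * x_mean n * (\<Sum>i<n. x n i) + real n * (x_mean n)^2"
    by (simp add: Sxx_def power2_diff sum_subtractf sum.distrib sum_distrib_left sum_distrib_right mult_ac)
  also have "(\<Sum>i<n. x n i) = real n * x_mean n" using n by (simp add: x_mean_def)
  also have "(\<Sum>i<n. (x n i)^2) = real n * x_sq_mean n" using n by (simp add: x_sq_mean_def)
  finally show ?thesis by (simp add: power2_eq_square algebra_simps)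
qed

lemma x_var_lim: "(\<lambda>n. Sxx n / real n) \<longlonglongrightarrow> cx2 - cx * cx"
proof -
  have "\<forall>\<^sub>F n in sequentially. x_sq_mean n - x_mean n * x_mean n = Sxx n / real n"
    using eventually_gt_at_top[of 2] by eventually_elim (simp add: Sxx_eq power2_eq_square)
  with tendsto_diff[OF x_sq_mean_lim tendsto_mult[OF x_mean_lim x_mean_lim]] show ?thesis
    by (rule Lim_transform_eventually)
qed

lemma eventually_Sxx_pos: "\<forall>\<^sub>F n in sequentially. Sxx n > 0 \<and> n > 2"
  using order_tendstoD(1)[OF x_var_lim limit_x_var_pos] eventually_gt_at_top[of 2]
  by eventually_elim (auto simp: zero_less_divide_iff)

lemma sum_centered_x_mean_Y: "n > 0 \<Longrightarrow> (\<Sum>i<n. (x n i - x_mean n) * mean_Y n i) = \<beta>1 * Sxx n"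
proof -
  assume n: "n > 0"
  have "(\<Sum>i<n. (x n i - x_mean n) * mean_Y n i)
      = (\<Sum>i<n. (\<beta>2 + \<beta>1 * x_mean n) * (x n i - x_mean n) + \<beta>1 * (x n i - x_mean n)^2)"
    by (intro sum.cong) (auto simp: mean_Y_def power2_eq_square algebra_simps)
  also have "\<dots> = (\<beta>2 + \<beta>1 * x_mean n) * (\<Sum>i<n. x n i - x_mean n) + \<beta>1 * Sxx n"
    by (simp add: Sxx_def sum.distrib sum_distrib_left)
  also have "(\<Sum>i<n. x n i - x_mean n) = 0" using n by (simp add: sum_subtractf x_mean_def)
  finally show ?thesis by simp
qed

(* The sign makes the mean of U converge to \<eta> itself rather than to -\<eta>. *)
definition "sign_eta = (if 0 \<le> \<beta>1 * \<eta> then 1 else -1 :: real)"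
definition "U n \<omega> = sign_eta * (\<Sum>i<n. (x n i - x_mean n) * Y n i \<omega>) / (\<sigma>e * sqrt (Sxx n))"
definition "noncentrality n = sign_eta * \<beta>1 * sqrt (Sxx n) / \<sigma>e"

lemma sign_eta_sq: "sign_eta^2 = 1"
  by (simp add: sign_eta_def)

lemma noncentrality_lim: "noncentrality \<longlonglongrightarrow> \<eta>"
proof (rule tendsto_of_power2_tendsto)
  have "(\<Sum>i<n. ((\<beta>2 + \<beta>1 * x n i) - ((\<beta>2 + \<beta>1 * ((\<Sum>j<n. x n j) / real n)) + 0 * x n i))^2) / \<sigma>e^2
      = (noncentrality n)^2" for n
  proof -
    have "(\<Sum>i<n. ((\<beta>2 + \<beta>1 * x n i) - ((\<beta>2 + \<beta>1 * ((\<Sum>j<n. x n j) / real n)) + 0 * x n i))^2)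
        = \<beta>1^2 * Sxx n"
      by (simp add: Sxx_def x_mean_def sum_distrib_left power2_eq_square algebra_simps)
    moreover have "(noncentrality n)^2 = \<beta>1^2 * Sxx n / \<sigma>e^2"
      using sign_eta_sq Sxx_nonneg[of n] by (simp add: noncentrality_def power_divide power_mult_distrib)
    ultimately show ?thesis by simp
  qed
  with eta_lim show "(\<lambda>n. (noncentrality n)^2) \<longlonglongrightarrow> \<eta>^2" by simp
  show "noncentrality n * \<eta> \<ge> 0" for n
    using sigma_pos Sxx_nonneg[of n]
    by (auto simp: noncentrality_def sign_eta_def zero_le_mult_iff zero_le_divide_iff
        mult_le_0_iff divide_le_0_iff)
qed

lemma U_normal:
  assumes n: "n > 2" and S: "Sxx n > 0"
  shows "distributed (M n) lborel (U n) (normal_density (noncentrality n) 1)"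
proof -
  define c where "c i = sign_eta * (x n i - x_mean n) / (\<sigma>e * sqrt (Sxx n))" for i
  have U_eq: "U n = (\<lambda>\<omega>. \<Sum>i<n. c i * Y n i \<omega>)"
    by (auto simp: U_def c_def sum_divide_distrib sum_distrib_left mult_ac)
  have mean_eq: "(\<Sum>i<n. c i * mean_Y n i) = noncentrality n"
  proof -
    have "(\<Sum>i<n. c i * mean_Y n i) = sign_eta / (\<sigma>e * sqrt (Sxx n)) * (\<beta>1 * Sxx n)"
      using n by (simp add: c_def sum_centered_x_mean_Y[symmetric] sum_distrib_left mult_ac)
    moreover have "sign_eta / (\<sigma>e * sqrt (Sxx n)) * (\<beta>1 * (sqrt (Sxx n) * sqrt (Sxx n))) = noncentrality n"
      using S sigma_pos by (simp add: noncentrality_def field_simps)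
    ultimately show ?thesis using Sxx_nonneg[of n] by (simp add: abs_of_nonneg)
  qed
  have sd_eq: "\<sigma>e * sqrt (\<Sum>i<n. (c i)^2) = 1"
  proof -
    have "(c i)^2 = (x n i - x_mean n)^2 / (\<sigma>e^2 * Sxx n)" for i
      using sign_eta_sq Sxx_nonneg[of n] by (simp add: c_def power_divide power_mult_distrib)
    then have "(\<Sum>i<n. (c i)^2) = Sxx n / (\<sigma>e^2 * Sxx n)"
      by (simp add: Sxx_def sum_divide_distrib)
    then show ?thesis using S sigma_pos by (simp add: real_sqrt_divide)
  qed
  have nonzero: "\<exists>i\<in>{..<n}. c i \<noteq> 0"
  proof (rule ccontr)
    assume "\<not> ?thesis"
    then have "\<forall>i<n. x n i = x_mean n"
      using S sigma_pos by (auto simp: c_def sign_eta_def split: if_splits)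
    then show False using S by (simp add: Sxx_def)
  qed
  have "distributed (M n) lborel (\<lambda>\<omega>. \<Sum>i<n. c i * Y n i \<omega>)
      (normal_density (\<Sum>i<n. c i * mean_Y n i) (\<sigma>e * sqrt (\<Sum>i<n. (c i)^2)))"
    by (rule prob_space.weighted_sum_indep_normal[OF prob[OF n] _ indep_Y[OF n] _ sigma_pos nonzero])
      (simp_all add: Y_normal n)
  then show ?thesis by (simp only: U_eq mean_eq sd_eq)
qed

lemma U_centered_std_normal:
  assumes "n > 2" "Sxx n > 0"
  shows "distributed (M n) lborel (\<lambda>\<omega>. U n \<omega> - noncentrality n) std_normal_density"
  using prob_space.normal_density_affine[OF prob[OF assms(1)] U_normal[OF assms], of 1 "- noncentrality n"]
  by simp

lemma bdd_in_prob_U: "bdd_in_prob U"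
proof -
  have moment: "integrable (M n) (\<lambda>\<omega>. (U n \<omega> - noncentrality n)^2)
      \<and> (\<integral>\<omega>. (U n \<omega> - noncentrality n)^2 \<partial>M n) = 1" if "Sxx n > 0 \<and> n > 2" for n
    using prob_space.normal_centered_power(1)[OF prob U_normal, of n 2]
      prob_space.normal_centered_moments(2)[OF prob U_normal, of n] that
    by simp
  have "bdd_in_prob (\<lambda>n \<omega>. U n \<omega> - noncentrality n)"
  proof (rule bdd_in_prob_second_moment)
    show "\<forall>\<^sub>F n in sequentially. (\<lambda>\<omega>. U n \<omega> - noncentrality n) \<in> borel_measurable (M n)"
      using eventually_Sxx_pos by eventually_elim (auto dest: distributed_measurable[OF U_centered_std_normal])
    show "\<forall>\<^sub>F n in sequentially. integrable (M n) (\<lambda>\<omega>. (U n \<omega> - noncentrality n)^2)"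
      and "\<forall>\<^sub>F n in sequentially. (\<integral>\<omega>. (U n \<omega> - noncentrality n)^2 \<partial>M n) \<le> 1"
      using eventually_Sxx_pos by (eventually_elim, use moment in simp)+
  qed
  from bdd_in_prob_add[OF this conv_in_prob_imp_bdd_in_prob[OF conv_in_prob_const[OF noncentrality_lim]]]
  show ?thesis by simp
qed

definition "scaled_Sxy n \<omega> = (\<Sum>i<n. (x n i - x_mean n) * Y n i \<omega>) / sqrt (real n)"
definition "T n \<omega> = \<sigma>e^2 * (U n \<omega>)^2"
definition "Fstat n \<omega> = real n * ftest_t (\<Delta> n) (\<rho> n) n (x n) (\<lambda>i. Y n i \<omega>) (\<lambda>k. Z n k \<omega>)"
definition "numerator_err n \<omega> = sqrt (real n) * (XYbar n \<omega> - Xbar n \<omega> * Ybar n \<omega>) - scaled_Sxy n \<omega>"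

lemma scaled_Sxy_eq_U:
  "n > 0 \<Longrightarrow> Sxx n > 0 \<Longrightarrow> scaled_Sxy n \<omega> = sign_eta * \<sigma>e * sqrt (Sxx n / real n) * U n \<omega>"
  using sign_eta_sq sigma_pos
  by (simp add: U_def scaled_Sxy_def real_sqrt_divide power2_eq_square field_simps)

lemma scaled_Sxy_eq_means: "n > 0 \<Longrightarrow> scaled_Sxy n \<omega> = sqrt (real n) * (xy_mean n \<omega> - x_mean n * y_mean n \<omega>)"
proof -
  assume n: "n > 0"
  have "(\<Sum>i<n. (x n i - x_mean n) * Y n i \<omega>) = real n * (xy_mean n \<omega> - x_mean n * y_mean n \<omega>)"
    using n by (simp add: xy_mean_def y_mean_def left_diff_distrib sum_subtractf sum_distrib_left field_simps)
  moreover have "real n / sqrt (real n) = sqrt (real n)" by (simp add: real_div_sqrt)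
  ultimately show ?thesis by (simp add: scaled_Sxy_def) (metis times_divide_eq_left mult.commute)
qed

lemma T_eq: "n > 0 \<Longrightarrow> Sxx n > 0 \<Longrightarrow> T n \<omega> = (scaled_Sxy n \<omega>)^2 / (Sxx n / real n)"
  using sign_eta_sq sigma_pos
  by (simp add: scaled_Sxy_eq_U T_def power_mult_distrib)

(* If the denominator vanishes, beta1_t and beta2_t are 0 (division by zero) and the identity
   fails; this event has vanishing probability. *)
lemma Fstat_eq:
  assumes "X2bar n \<omega> - Xbar n \<omega> * Xbar n \<omega> \<noteq> 0"
  shows "Fstat n \<omega> = (sqrt (real n) * (XYbar n \<omega> - Xbar n \<omega> * Ybar n \<omega>))^2 / (X2bar n \<omega> - Xbar n \<omega> * Xbar n \<omega>)"
  using qform2_slope_eq[OF assms, of "Ybar n \<omega>" "XYbar n \<omega>"]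
  by (simp add: Fstat_def ftest_t_def beta1_t_def beta2_t_def Xbar_def Ybar_def X2bar_def XYbar_def
      power_mult_distrib)

lemma numerator_err_eq:
  assumes "n > 2"
  shows "numerator_err n \<omega> = (sqrt (real n) * sd_xy n) * Z n 3 \<omega> + sqrt (real n) * clip_err_xy n \<omega>
    - ((sqrt (real n) * sd_mean n) * Z n 0 \<omega>) * Ybar n \<omega> - x_mean n * ((sqrt (real n) * sd_mean n) * Z n 1 \<omega>)
    - x_mean n * (sqrt (real n) * clip_err_y n \<omega>)"
  using assms
  by (simp add: numerator_err_def scaled_Sxy_eq_means XYbar_eq Xbar_eq Ybar_eq[of n \<omega>] algebra_simps)

lemma conv_in_prob_numerator_err: "conv_in_prob numerator_err 0"
proof -
  have "conv_in_prob (\<lambda>n \<omega>. (sqrt (real n) * sd_xy n) * Z n 3 \<omega> + sqrt (real n) * clip_err_xy n \<omega>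
    - ((sqrt (real n) * sd_mean n) * Z n 0 \<omega>) * Ybar n \<omega> - x_mean n * ((sqrt (real n) * sd_mean n) * Z n 1 \<omega>)
    - x_mean n * (sqrt (real n) * clip_err_y n \<omega>)) (0 + 0 - 0 * (\<beta>2 + \<beta>1 * cx) - cx * 0 - cx * 0)"
    by (intro conv_in_prob_add conv_in_prob_diff conv_in_prob_mult conv_in_prob_noise sqrt_n_sd_lim
        conv_in_prob_clip_err conv_in_prob_Ybar conv_in_prob_const x_mean_lim) simp_all
  then show ?thesis
    by (rule conv_in_prob_cong[OF _ eventually_mono[OF eventually_gt_at_top[of 2]]]) (simp_all add: numerator_err_eq)
qed

lemma eventually_Fstat_measurable: "\<forall>\<^sub>F n in sequentially. Fstat n \<in> borel_measurable (M n)"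
  using conv_in_prob_measurable[OF conv_in_prob_Xbar] conv_in_prob_measurable[OF conv_in_prob_X2bar]
    conv_in_prob_measurable[OF conv_in_prob_Ybar] conv_in_prob_measurable[OF conv_in_prob_Beta1]
    conv_in_prob_measurable[OF conv_in_prob_Beta2]
proof eventually_elim
  case (elim n)
  note [measurable] = elim
  have "Fstat n = (\<lambda>\<omega>. real n * qform2 1 (Xbar n \<omega>) (X2bar n \<omega>) (Beta2 n \<omega> - Ybar n \<omega>) (Beta1 n \<omega> - 0))"
    by (simp add: fun_eq_iff Fstat_def ftest_t_def Xbar_def X2bar_def Beta2_def Ybar_def Beta1_def)
  then show ?case unfolding qform2_def by simp
qed

lemma eventually_T_measurable: "\<forall>\<^sub>F n in sequentially. T n \<in> borel_measurable (M n)"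
  using eventually_Sxx_pos
proof eventually_elim
  case (elim n)
  have [measurable]: "U n \<in> borel_measurable (M n)"
    using U_normal[of n] elim by (auto dest: distributed_measurable)
  show ?case unfolding T_def[abs_def] by measurable
qed

lemma conv_in_prob_Fstat_minus_T: "conv_in_prob (\<lambda>n \<omega>. Fstat n \<omega> - T n \<omega>) 0"
proof (rule conv_in_prob_cong_nonzero)
  show "conv_in_prob (\<lambda>n \<omega>. X2bar n \<omega> - Xbar n \<omega> * Xbar n \<omega>) (cx2 - cx * cx)"
    by (intro conv_in_prob_diff conv_in_prob_mult conv_in_prob_X2bar conv_in_prob_Xbar)
  show "cx2 - cx * cx \<noteq> 0" using limit_x_var_pos by simp
  show "conv_in_prob (\<lambda>n \<omega>. (scaled_Sxy n \<omega> + numerator_err n \<omega>)^2 / (X2bar n \<omega> - Xbar n \<omega> * Xbar n \<omega>)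
      - (scaled_Sxy n \<omega>)^2 / (Sxx n / real n)) 0"
  proof (rule conv_in_prob_square_ratio_diff[OF _ conv_in_prob_numerator_err _ x_var_lim])
    show "bdd_in_prob scaled_Sxy"
    proof (rule bdd_in_prob_cong)
      have "(\<lambda>n. sign_eta * \<sigma>e * sqrt (Sxx n / real n)) \<longlonglongrightarrow> sign_eta * \<sigma>e * sqrt (cx2 - cx * cx)"
        by (intro tendsto_intros x_var_lim)
      then show "bdd_in_prob (\<lambda>n \<omega>. sign_eta * \<sigma>e * sqrt (Sxx n / real n) * U n \<omega>)"
        by (intro bdd_in_prob_mult bdd_in_prob_U conv_in_prob_imp_bdd_in_prob[OF conv_in_prob_const])
      show "\<forall>\<^sub>F n in sequentially. \<forall>\<omega>\<in>space (M n).
          sign_eta * \<sigma>e * sqrt (Sxx n / real n) * U n \<omega> = scaled_Sxy n \<omega>"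
        using eventually_Sxx_pos by eventually_elim (simp add: scaled_Sxy_eq_U)
    qed
    show "conv_in_prob (\<lambda>n \<omega>. X2bar n \<omega> - Xbar n \<omega> * Xbar n \<omega>) (cx2 - cx * cx)"
      by (intro conv_in_prob_diff conv_in_prob_mult conv_in_prob_X2bar conv_in_prob_Xbar)
  qed (use limit_x_var_pos in simp)
  show "\<forall>\<^sub>F n in sequentially. (\<lambda>\<omega>. Fstat n \<omega> - T n \<omega>) \<in> borel_measurable (M n)"
    using eventually_Fstat_measurable eventually_T_measurable by eventually_elim (rule borel_measurable_diff)
  show "\<forall>\<^sub>F n in sequentially. \<forall>\<omega>\<in>space (M n). X2bar n \<omega> - Xbar n \<omega> * Xbar n \<omega> \<noteq> 0 \<longrightarrow>
      (scaled_Sxy n \<omega> + numerator_err n \<omega>)^2 / (X2bar n \<omega> - Xbar n \<omega> * Xbar n \<omega>)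
        - (scaled_Sxy n \<omega>)^2 / (Sxx n / real n) = Fstat n \<omega> - T n \<omega>"
    using eventually_Sxx_pos by eventually_elim (simp add: Fstat_eq T_eq numerator_err_def)
qed

lemma tendsto_integral_cts_step_T:
  assumes uv: "u < v"
  shows "(\<lambda>n. \<integral>\<omega>. cts_step u v (T n \<omega>) \<partial>M n) \<longlonglongrightarrow>
    integral\<^sup>L (distr (density lborel std_normal_density) borel (\<lambda>w. \<sigma>e^2 * (w + \<eta>)^2)) (cts_step u v)"
proof -
  note [measurable] = borel_measurable_cts_step[OF uv]
  define g where "g t = cts_step u v (\<sigma>e^2 * t^2)" for t
  have g_cont: "continuous_on UNIV g"
    unfolding g_def
    by (intro continuous_on_compose2[OF continuous_on_cts_step[OF uv]] continuous_intros) auto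
  have [measurable]: "g \<in> borel_measurable borel"
    using g_cont by (rule borel_measurable_continuous_onI)
  have "\<forall>\<^sub>F n in sequentially.
      (\<integral>w. std_normal_density w * g (w + noncentrality n) \<partial>lborel) = (\<integral>\<omega>. cts_step u v (T n \<omega>) \<partial>M n)"
    using eventually_Sxx_pos
  proof eventually_elim
    case (elim n)
    have "(\<integral>w. std_normal_density w * g (w + noncentrality n) \<partial>lborel)
        = (\<integral>\<omega>. g ((U n \<omega> - noncentrality n) + noncentrality n) \<partial>M n)"
      by (rule distributed_integral[OF U_centered_std_normal]) (use elim in auto)
    then show ?case by (simp add: g_def T_def)
  qed
  moreover have "(\<lambda>n. \<integral>w. std_normal_density w * g (w + noncentrality n) \<partial>lborel)
      \<longlonglongrightarrow> (\<integral>w. std_normal_density w * g (w + \<eta>) \<partial>lborel)"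
    by (rule tendsto_integral_std_normal_shift[OF g_cont _ noncentrality_lim, where B=1])
      (simp add: g_def abs_cts_step_le_1[OF uv])
  moreover have "(\<integral>w. std_normal_density w * g (w + \<eta>) \<partial>lborel)
      = integral\<^sup>L (distr (density lborel std_normal_density) borel (\<lambda>w. \<sigma>e^2 * (w + \<eta>)^2)) (cts_step u v)"
    by (simp add: g_def integral_distr integral_density)
  ultimately show ?thesis
    by (simp add: Lim_transform_eventually)
qed

lemma weak_conv_Fstat:
  "weak_conv_m (\<lambda>n. distr (M n) borel (Fstat n))
     (distr (density lborel std_normal_density) borel (\<lambda>w. \<sigma>e^2 * (w + \<eta>)^2))"
proof (rule weak_conv_m_of_conv_in_prob_diff[OF conv_in_prob_Fstat_minus_T eventually_Fstat_measurable
      eventually_T_measurable _ tendsto_integral_cts_step_T])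
  have "prob_space (density lborel std_normal_density)"
    by (rule prob_space_normal_density) simp
  then show "real_distribution (distr (density lborel std_normal_density) borel (\<lambda>w. \<sigma>e^2 * (w + \<eta>)^2))"
    by (rule prob_space.real_distribution_distr) simp
qed

end

theorem lemma5p15:
  fixes \<sigma>e \<beta>1 \<beta>2 cx cx2 \<eta> :: real
    and x :: "nat \<Rightarrow> nat \<Rightarrow> real"
    and \<Delta> \<rho> :: "nat \<Rightarrow> real"
    and M :: "nat \<Rightarrow> 'a measure"
    and Y :: "nat \<Rightarrow> nat \<Rightarrow> 'a \<Rightarrow> real"
    and Z :: "nat \<Rightarrow> nat \<Rightarrow> 'a \<Rightarrow> real"
  assumes sigma_pos: "\<sigma>e > 0"
    and Delta_pos: "\<And>n. \<Delta> n > 0"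
    and rho_pos: "\<And>n. \<rho> n > 0"
    and prob: "\<And>n. n > 2 \<Longrightarrow> prob_space (M n)"
    and Y_distr: "\<And>n i. n > 2 \<Longrightarrow> i < n \<Longrightarrow>
        distributed (M n) lborel (Y n i) (\<lambda>t. ennreal (normal_density (\<beta>2 + \<beta>1 * x n i) \<sigma>e t))"
    and Z_distr: "\<And>n k. n > 2 \<Longrightarrow> k < 5 \<Longrightarrow>
        distributed (M n) lborel (Z n k) (\<lambda>t. ennreal (std_normal_density t))"
    and indep: "\<And>n. n > 2 \<Longrightarrow>
        prob_space.indep_vars (M n) (\<lambda>_. borel) (case_sum (Y n) (Z n)) (Inl ` {..<n} \<union> Inr ` {..<5})"
    and xbar_lim: "(\<lambda>n. (\<Sum>i<n. x n i) / real n) \<longlonglongrightarrow> cx"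
    and x2bar_lim: "(\<lambda>n. (\<Sum>i<n. (x n i)^2) / real n) \<longlonglongrightarrow> cx2"
    and c_ineq: "cx2 > cx^2"
    and eta_lim: "(\<lambda>n. (\<Sum>i<n. ((\<beta>2 + \<beta>1 * x n i)
                       - ((\<beta>2 + \<beta>1 * ((\<Sum>j<n. x n j) / real n)) + 0 * x n i))^2) / \<sigma>e^2)
                  \<longlonglongrightarrow> \<eta>^2"
    and Delta_rho1: "(\<lambda>n. (\<Delta> n)^2 / (\<rho> n * real n)) \<longlonglongrightarrow> 0"
    and Delta_rho2: "(\<lambda>n. (\<Delta> n)^4 / (\<rho> n * real n)) \<longlonglongrightarrow> 0"
    and y_clip: "(\<lambda>n. measure (M n) {\<omega> \<in> space (M n). \<exists>i<n. Y n i \<omega> \<notin> {-\<Delta> n..\<Delta> n}}) \<longlonglongrightarrow> 0"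
    and x_in: "\<And>n i. n > 2 \<Longrightarrow> i < n \<Longrightarrow> x n i \<in> {-\<Delta> n..\<Delta> n}"
  shows "(\<forall>\<epsilon>>0. (\<lambda>n. measure (M n) {\<omega> \<in> space (M n).
             \<bar>real n * resid_t (\<Delta> n) (\<rho> n) n (x n) (\<lambda>i. Y n i \<omega>) (\<lambda>k. Z n k \<omega>) / (real n - 2)
              - \<sigma>e^2\<bar> > \<epsilon>}) \<longlonglongrightarrow> 0)
         \<and> weak_conv_m
           (\<lambda>n. distr (M n) borel
                  (\<lambda>\<omega>. real n * ftest_t (\<Delta> n) (\<rho> n) n (x n) (\<lambda>i. Y n i \<omega>) (\<lambda>k. Z n k \<omega>)))
           (distr (density lborel std_normal_density) borel (\<lambda>w. \<sigma>e^2 * (w + \<eta>)^2))"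
proof -
  interpret private_regression \<sigma>e \<beta>1 \<beta>2 cx cx2 \<eta> x \<Delta> \<rho> M Y Z
    by (rule private_regression.intro) (fact assms)+
  show ?thesis
    using conv_in_prob_scaled_Resid weak_conv_Fstat
    by (simp add: conv_in_prob_def Resid_def Fstat_def[abs_def])
qed

end
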